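(* Let $X$ be a space which has a $\sigma$-strongly point-finite (respectively, $\sigma$-boundedly point-finite) family $\mathcal{P}$ of clopen sets such that $\mathcal{P}\cup\{X\setminus U: U\in\mathcal{P}\}$ is a subbase of $X$. Then $X$ can be embedded in a zero-dimensional Eberlein compact (respectively, a zero-dimensional uniform Eberlein compact). In particular, every space having a $\sigma$-strongly point-finite base of clopen sets can be embedded in a zero-dimensional Eberlein compact, and every space having a $\sigma$-boundedly point-finite or a $\sigma$-disjoint base of clopen sets can be embedded in a zero-dimensional uniform Eberlein compact.
   Context: "Space" means topological $T_0$-space. A family of subsets of a set is strongly point-finite if every countably infinite subfamily contains a finite subfamily with empty intersection; it is boundedly point-finite if there is an integer $n$ such that any $n+2$ of its members have empty intersection. $\sigma$-strongly point-finite (resp. $\sigma$-boundedly point-finite) means a countable union of strongly point-finite (resp. boundedly point-finite) families. An Eberlein compact is a compact Hausdorff space homeomorphic to a weakly compact subset of a Banach space; a uniform Eberlein compact is one homeomorphic to a weakly compact subset of a Hilbert space. *)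

theory Defs
  imports "HOL-Analysis.Analysis"
begin

definition strongly_point_finite :: "'a set set \<Rightarrow> bool" where
  "strongly_point_finite \<P> \<longleftrightarrow>
     (\<forall>\<Q>. \<Q> \<subseteq> \<P> \<and> countable \<Q> \<and> infinite \<Q> \<longrightarrow>
        (\<exists>\<F>. \<F> \<subseteq> \<Q> \<and> finite \<F> \<and> \<F> \<noteq> {} \<and> \<Inter>\<F> = {}))"

definition boundedly_point_finite :: "'a set set \<Rightarrow> bool" where
  "boundedly_point_finite \<P> \<longleftrightarrow>
     (\<exists>n::nat. \<forall>\<F>. \<F> \<subseteq> \<P> \<and> finite \<F> \<and> card \<F> = n + 2 \<longrightarrow> \<Inter>\<F> = {})"

definition sigma_strongly_point_finite :: "'a set set \<Rightarrow> bool" where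
  "sigma_strongly_point_finite \<P> \<longleftrightarrow>
     (\<exists>\<P>s :: nat \<Rightarrow> 'a set set. \<P> = (\<Union>n. \<P>s n) \<and> (\<forall>n. strongly_point_finite (\<P>s n)))"

definition sigma_boundedly_point_finite :: "'a set set \<Rightarrow> bool" where
  "sigma_boundedly_point_finite \<P> \<longleftrightarrow>
     (\<exists>\<P>s :: nat \<Rightarrow> 'a set set. \<P> = (\<Union>n. \<P>s n) \<and> (\<forall>n. boundedly_point_finite (\<P>s n)))"

definition sigma_disjoint :: "'a set set \<Rightarrow> bool" where
  "sigma_disjoint \<P> \<longleftrightarrow>
     (\<exists>\<P>s :: nat \<Rightarrow> 'a set set. \<P> = (\<Union>n. \<P>s n) \<and> (\<forall>n. pairwise disjnt (\<P>s n)))"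

definition subbase_of :: "'a set set \<Rightarrow> 'a topology \<Rightarrow> bool" where
  "subbase_of S X \<longleftrightarrow>
     S \<subseteq> Pow (topspace X) \<and>
     openin X = arbitrary union_of (finite intersection_of (\<lambda>U. U \<in> S) relative_to topspace X)"

definition base_of :: "'a set set \<Rightarrow> 'a topology \<Rightarrow> bool" where
  "base_of B X \<longleftrightarrow> (\<forall>U\<in>B. openin X U) \<and> openin X = arbitrary union_of (\<lambda>U. U \<in> B)"

definition clopen_family :: "'a topology \<Rightarrow> 'a set set \<Rightarrow> bool" where
  "clopen_family X \<P> \<longleftrightarrow> (\<forall>U\<in>\<P>. openin X U \<and> closedin X U)"

definition real_vector_space_on ::
  "'v set \<Rightarrow> ('v \<Rightarrow> 'v \<Rightarrow> 'v) \<Rightarrow> (real \<Rightarrow> 'v \<Rightarrow> 'v) \<Rightarrow> 'v \<Rightarrow> bool" where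
  "real_vector_space_on V add smul zero \<longleftrightarrow>
     zero \<in> V \<and>
     (\<forall>x\<in>V. \<forall>y\<in>V. add x y \<in> V) \<and>
     (\<forall>a. \<forall>x\<in>V. smul a x \<in> V) \<and>
     (\<forall>x\<in>V. \<forall>y\<in>V. \<forall>z\<in>V. add (add x y) z = add x (add y z)) \<and>
     (\<forall>x\<in>V. \<forall>y\<in>V. add x y = add y x) \<and>
     (\<forall>x\<in>V. add zero x = x) \<and>
     (\<forall>x\<in>V. \<exists>y\<in>V. add x y = zero) \<and>
     (\<forall>a. \<forall>x\<in>V. \<forall>y\<in>V. smul a (add x y) = add (smul a x) (smul a y)) \<and>
     (\<forall>a b. \<forall>x\<in>V. smul (a + b) x = add (smul a x) (smul b x)) \<and>
     (\<forall>a b. \<forall>x\<in>V. smul a (smul b x) = smul (a * b) x) \<and>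
     (\<forall>x\<in>V. smul 1 x = x)"

definition banach_space_on ::
  "'v set \<Rightarrow> ('v \<Rightarrow> 'v \<Rightarrow> 'v) \<Rightarrow> (real \<Rightarrow> 'v \<Rightarrow> 'v) \<Rightarrow> 'v \<Rightarrow> ('v \<Rightarrow> real) \<Rightarrow> bool" where
  "banach_space_on V add smul zero nrm \<longleftrightarrow>
     real_vector_space_on V add smul zero \<and>
     (\<forall>x\<in>V. nrm x \<ge> 0) \<and>
     (\<forall>x\<in>V. nrm x = 0 \<longleftrightarrow> x = zero) \<and>
     (\<forall>a. \<forall>x\<in>V. nrm (smul a x) = \<bar>a\<bar> * nrm x) \<and>
     (\<forall>x\<in>V. \<forall>y\<in>V. nrm (add x y) \<le> nrm x + nrm y) \<and>
     (\<forall>s :: nat \<Rightarrow> 'v. (\<forall>n. s n \<in> V) \<and>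
        (\<forall>e>0. \<exists>N. \<forall>m\<ge>N. \<forall>n\<ge>N. nrm (add (s m) (smul (-1) (s n))) < e) \<longrightarrow>
        (\<exists>l\<in>V. (\<lambda>n. nrm (add (s n) (smul (-1) l))) \<longlonglongrightarrow> 0))"

definition hilbert_space_on ::
  "'v set \<Rightarrow> ('v \<Rightarrow> 'v \<Rightarrow> 'v) \<Rightarrow> (real \<Rightarrow> 'v \<Rightarrow> 'v) \<Rightarrow> 'v \<Rightarrow> ('v \<Rightarrow> 'v \<Rightarrow> real) \<Rightarrow> bool" where
  "hilbert_space_on V add smul zero inn \<longleftrightarrow>
     (\<forall>x\<in>V. \<forall>y\<in>V. inn x y = inn y x) \<and>
     (\<forall>x\<in>V. \<forall>y\<in>V. \<forall>z\<in>V. inn (add x y) z = inn x z + inn y z) \<and>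
     (\<forall>a. \<forall>x\<in>V. \<forall>y\<in>V. inn (smul a x) y = a * inn x y) \<and>
     (\<forall>x\<in>V. inn x x \<ge> 0) \<and>
     banach_space_on V add smul zero (\<lambda>x. sqrt (inn x x))"

definition bounded_linear_functional_on ::
  "'v set \<Rightarrow> ('v \<Rightarrow> 'v \<Rightarrow> 'v) \<Rightarrow> (real \<Rightarrow> 'v \<Rightarrow> 'v) \<Rightarrow> ('v \<Rightarrow> real) \<Rightarrow> ('v \<Rightarrow> real) \<Rightarrow> bool" where
  "bounded_linear_functional_on V add smul nrm f \<longleftrightarrow>
     (\<forall>x\<in>V. \<forall>y\<in>V. f (add x y) = f x + f y) \<and>
     (\<forall>a. \<forall>x\<in>V. f (smul a x) = a * f x) \<and>
     (\<exists>c. \<forall>x\<in>V. \<bar>f x\<bar> \<le> c * nrm x)"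

definition weak_topology_on ::
  "'v set \<Rightarrow> ('v \<Rightarrow> 'v \<Rightarrow> 'v) \<Rightarrow> (real \<Rightarrow> 'v \<Rightarrow> 'v) \<Rightarrow> ('v \<Rightarrow> real) \<Rightarrow> 'v topology" where
  "weak_topology_on V add smul nrm =
     subtopology
       (topology_generated_by
          {{x. f x \<in> U} | f U. bounded_linear_functional_on V add smul nrm f \<and> open U})
       V"

text \<open>A compact Hausdorff space homeomorphic to a weakly compact subset of a
  real Banach space (resp. Hilbert space). The Banach space carrier lives in
  the type 'v, given by the first argument.\<close>
definition eberlein_compact :: "'v itself \<Rightarrow> 'b topology \<Rightarrow> bool" where
  "eberlein_compact (_ :: 'v itself) K \<longleftrightarrow>
     compact_space K \<and> Hausdorff_space K \<and>
     (\<exists>(V::'v set) add smul zero nrm C h.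
        banach_space_on V add smul zero nrm \<and> C \<subseteq> V \<and>
        compactin (weak_topology_on V add smul nrm) C \<and>
        homeomorphic_map K (subtopology (weak_topology_on V add smul nrm) C) h)"

definition uniform_eberlein_compact :: "'v itself \<Rightarrow> 'b topology \<Rightarrow> bool" where
  "uniform_eberlein_compact (_ :: 'v itself) K \<longleftrightarrow>
     compact_space K \<and> Hausdorff_space K \<and>
     (\<exists>(V::'v set) add smul zero inn C h.
        hilbert_space_on V add smul zero inn \<and> C \<subseteq> V \<and>
        compactin (weak_topology_on V add smul (\<lambda>x. sqrt (inn x x))) C \<and>
        homeomorphic_map K
          (subtopology (weak_topology_on V add smul (\<lambda>x. sqrt (inn x x))) C) h)"

text \<open>Zero-dimensional: small inductive dimension 0 (equivalently, for
  these spaces, a base of clopen sets).\<close>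

end

theory Submission
  imports Defs
begin

text \<open>A point x is sent to the vector of weighted indicators \<open>(w U \<cdot> [x \<in> U])\<^sub>U\<^sub>\<in>\<^sub>P\<close>
  with positive weights. As X is \<open>T\<^sub>0\<close> and P together with the complements of its members is a
  subbase, this embeds X into a product of two-point spaces, and the closure K of the image is a
  compact zero-dimensional space. For a point f of K the members U with \<open>f U \<noteq> 0\<close> have the finite
  intersection property, so f has finitely many nonzero coordinates on each strongly point-finite
  piece \<open>P\<^sub>n\<close>, and at most \<open>b\<^sub>n + 1\<close> on a piece in which any \<open>b\<^sub>n + 2\<close> members are disjoint.
  The weights \<open>1/(n + 1)\<close>, resp. \<open>2\<^sup>-\<^sup>n/(b\<^sub>n + 1)\<close>, on \<open>P\<^sub>n\<close> therefore put K into \<open>c\<^sub>0(P)\<close>, resp.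
  into a ball of \<open>\<ell>\<^sub>2(P)\<close>. On a norm-bounded set that is compact for the product topology every
  bounded functional is continuous, so the weak topology agrees with the product topology there
  and K is weakly compact.\<close>

section \<open>Weak topologies of spaces of real families\<close>

lemma bounded_linear_functional_on_zero:
  "bounded_linear_functional_on V add smul nrm (\<lambda>x. 0)"
  unfolding bounded_linear_functional_on_def by (auto intro: exI[of _ 0])

lemma bounded_linear_functional_on_coordinate:
  assumes "\<And>x. x \<in> V \<Longrightarrow> \<bar>x i\<bar> \<le> nrm x"
  shows "bounded_linear_functional_on V (\<lambda>x y i. x i + y i) (\<lambda>a x i. a * x i) nrm (\<lambda>x. x i)"
  unfolding bounded_linear_functional_on_def using assms by (auto intro!: exI[of _ 1])

lemma bounded_linear_functional_on_nonneg_bound: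
  assumes "bounded_linear_functional_on V add smul nrm \<phi>" and "\<And>x. x \<in> V \<Longrightarrow> 0 \<le> nrm x"
  obtains k where "k \<ge> 0" and "\<And>x. x \<in> V \<Longrightarrow> \<bar>\<phi> x\<bar> \<le> k * nrm x"
proof -
  obtain c where c: "\<And>x. x \<in> V \<Longrightarrow> \<bar>\<phi> x\<bar> \<le> c * nrm x"
    using assms(1) unfolding bounded_linear_functional_on_def by blast
  have "\<bar>\<phi> x\<bar> \<le> max c 0 * nrm x" if "x \<in> V" for x
    using c[OF that] mult_right_mono[OF max.cobounded1[of c 0] assms(2)[OF that]] by linarith
  then show thesis by (intro that[of "max c 0"]) auto
qed

lemma openin_weak_topology_on_preimage:
  assumes "bounded_linear_functional_on V add smul nrm \<phi>" and "open U"
  shows "openin (weak_topology_on V add smul nrm) (V \<inter> {x. \<phi> x \<in> U})"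
  unfolding weak_topology_on_def openin_subtopology
  using assms by (intro exI[of _ "{x. \<phi> x \<in> U}"] conjI topology_generated_by_Basis) auto

lemma UNIV_in_weak_subbase:
  "UNIV \<in> {{x. \<phi> x \<in> U} | \<phi> U. bounded_linear_functional_on V add smul nrm \<phi> \<and> open U}"
  using bounded_linear_functional_on_zero by (intro CollectI exI[of _ "\<lambda>x. 0"] exI[of _ UNIV]) auto

lemma topspace_weak_topology_on [simp]: "topspace (weak_topology_on V add smul nrm) = V"
  using UNIV_in_weak_subbase[of V add smul nrm] by (auto simp: weak_topology_on_def)

lemma continuous_map_into_weak_topology_on:
  assumes "g \<in> topspace T \<rightarrow> V"
    and "\<And>\<phi>. bounded_linear_functional_on V add smul nrm \<phi> \<Longrightarrow> continuous_map T euclidean (\<phi> \<circ> g)"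
  shows "continuous_map T (weak_topology_on V add smul nrm) g"
  unfolding weak_topology_on_def continuous_map_in_subtopology
proof (intro conjI continuous_on_generated_topo)
  fix S assume "S \<in> {{x. \<phi> x \<in> U} | \<phi> U. bounded_linear_functional_on V add smul nrm \<phi> \<and> open U}"
  then obtain \<phi> U where "S = {x. \<phi> x \<in> U}" "bounded_linear_functional_on V add smul nrm \<phi>" "open U"
    by blast
  with assms(2) have "openin T {x \<in> topspace T. \<phi> (g x) \<in> U}"
    by (simp add: continuous_map_def)
  then show "openin T (g -` S \<inter> topspace T)"
    by (simp add: \<open>S = {x. \<phi> x \<in> U}\<close> vimage_def Int_def conj_commute)
next
  show "g ` topspace T \<subseteq> \<Union> {{x. \<phi> x \<in> U} | \<phi> U. bounded_linear_functional_on V add smul nrm \<phi> \<and> open U}"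
    using UNIV_in_weak_subbase[of V add smul nrm] by blast
qed (use assms(1) in blast)

lemma Hausdorff_weak_topology_on_pointwise:
  assumes "\<And>i x. x \<in> V \<Longrightarrow> \<bar>x i\<bar> \<le> nrm x"
  shows "Hausdorff_space (weak_topology_on V (\<lambda>x y i. x i + y i) (\<lambda>a x i. a * x i) nrm)"
  unfolding Hausdorff_space_def topspace_weak_topology_on
proof (intro allI impI)
  fix x y assume xy: "x \<in> V \<and> y \<in> V \<and> x \<noteq> y"
  then obtain i where "x i \<noteq> y i" by auto
  then obtain A B where AB: "open A" "open B" "x i \<in> A" "y i \<in> B" "disjnt A B"
    by (metis disjnt_def hausdorff)
  have coord: "bounded_linear_functional_on V (\<lambda>x y i. x i + y i) (\<lambda>a x i. a * x i) nrm (\<lambda>x. x i)"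
    using assms by (rule bounded_linear_functional_on_coordinate)
  show "\<exists>U W. openin (weak_topology_on V (\<lambda>x y i. x i + y i) (\<lambda>a x i. a * x i) nrm) U \<and>
      openin (weak_topology_on V (\<lambda>x y i. x i + y i) (\<lambda>a x i. a * x i) nrm) W \<and>
      x \<in> U \<and> y \<in> W \<and> disjnt U W"
  proof (intro exI conjI)
    show "openin (weak_topology_on V (\<lambda>x y i. x i + y i) (\<lambda>a x i. a * x i) nrm) (V \<inter> {z. z i \<in> A})"
      "openin (weak_topology_on V (\<lambda>x y i. x i + y i) (\<lambda>a x i. a * x i) nrm) (V \<inter> {z. z i \<in> B})"
      using AB by (auto intro: openin_weak_topology_on_preimage[OF coord])
  qed (use xy AB in \<open>auto simp: disjnt_def\<close>)
qed

text \<open>If all bounded functionals are continuous on C, the identity from the product topology on C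
  to the weak topology is continuous; it is a homeomorphism as C is compact and the weak topology
  is Hausdorff.\<close>
lemma weak_topology_on_agrees_on_compact:
  assumes "C \<subseteq> V" and "compact C"
    and "\<And>i x. x \<in> V \<Longrightarrow> \<bar>x i\<bar> \<le> nrm x"
    and "\<And>\<phi>. bounded_linear_functional_on V (\<lambda>x y i. x i + y i) (\<lambda>a x i. a * x i) nrm \<phi> \<Longrightarrow>
           continuous_on C \<phi>"
  shows "compactin (weak_topology_on V (\<lambda>x y i. x i + y i) (\<lambda>a x i. a * x i) nrm) C"
    and "homeomorphic_map (top_of_set C)
           (subtopology (weak_topology_on V (\<lambda>x y i. x i + y i) (\<lambda>a x i. a * x i) nrm) C) id"
proof -
  let ?W = "weak_topology_on V (\<lambda>x y i. x i + y i) (\<lambda>a x i. a * x i) nrm"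
  have cont: "continuous_map (top_of_set C) ?W id"
    using assms(1,4) by (intro continuous_map_into_weak_topology_on) auto
  show "compactin ?W C"
    using image_compactin[OF _ cont] assms(2) by (simp add: compactin_subtopology)
  show "homeomorphic_map (top_of_set C) (subtopology ?W C) id"
  proof (rule continuous_imp_homeomorphic_map)
    show "continuous_map (top_of_set C) (subtopology ?W C) id"
      using cont by (auto simp: continuous_map_in_subtopology)
    show "Hausdorff_space (subtopology ?W C)"
      using Hausdorff_weak_topology_on_pointwise[OF assms(3)] by (rule Hausdorff_space_subtopology)
  qed (use assms(1,2) in \<open>auto simp: compact_space_subtopology\<close>)
qed

lemma bounded_finite_sums_imp_small_tails:
  fixes g :: "'i \<Rightarrow> real"
  assumes bound: "\<And>G. finite G \<Longrightarrow> sum g G \<le> B" and "\<epsilon> > 0"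
  obtains G0 where "finite G0" and "\<And>G. finite G \<Longrightarrow> G \<inter> G0 = {} \<Longrightarrow> sum g G \<le> \<epsilon>"
proof -
  define T where "T = sum g ` {G. finite G}"
  have "T \<noteq> {}" and bdd: "bdd_above T"
    unfolding T_def using bound by (auto intro!: bdd_aboveI[of _ B])
  then obtain G0 where G0: "finite G0" and close: "Sup T - \<epsilon> < sum g G0"
    using less_cSup_iff[of T "Sup T - \<epsilon>"] \<open>\<epsilon> > 0\<close> by (auto simp: T_def)
  show thesis
  proof (rule that[OF G0])
    fix G assume "finite G" and "G \<inter> G0 = {}"
    then have "sum g G + sum g G0 = sum g (G \<union> G0)"
      using G0 by (simp add: sum.union_disjoint)
    also have "\<dots> \<le> Sup T"
      using \<open>finite G\<close> G0 by (intro cSup_upper bdd) (auto simp: T_def)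
    finally show "sum g G \<le> \<epsilon>" using close by linarith
  qed
qed

definition unit_coeff :: "(('i \<Rightarrow> real) \<Rightarrow> real) \<Rightarrow> 'i \<Rightarrow> real" where
  "unit_coeff \<phi> i = \<phi> (\<lambda>j. if j = i then 1 else 0)"

locale pointwise_linear_functional =
  fixes V :: "('i \<Rightarrow> real) set" and \<phi> :: "('i \<Rightarrow> real) \<Rightarrow> real"
  assumes finite_support_mem: "\<And>G x. finite G \<Longrightarrow> (\<And>j. j \<notin> G \<Longrightarrow> x j = 0) \<Longrightarrow> x \<in> V"
    and add_mem: "\<And>x y. x \<in> V \<Longrightarrow> y \<in> V \<Longrightarrow> (\<lambda>i. x i + y i) \<in> V"
    and scale_mem: "\<And>a x. x \<in> V \<Longrightarrow> (\<lambda>i. a * x i) \<in> V"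
    and vanish_on_mem: "\<And>G x. x \<in> V \<Longrightarrow> (\<lambda>j. if j \<in> G then 0 else x j) \<in> V"
    and additive: "\<And>x y. x \<in> V \<Longrightarrow> y \<in> V \<Longrightarrow> \<phi> (\<lambda>i. x i + y i) = \<phi> x + \<phi> y"
    and homogeneous: "\<And>a x. x \<in> V \<Longrightarrow> \<phi> (\<lambda>i. a * x i) = a * \<phi> x"
begin

lemma diff_mem: "x \<in> V \<Longrightarrow> y \<in> V \<Longrightarrow> (\<lambda>i. x i + - 1 * y i) \<in> V"
  by (intro add_mem scale_mem)

lemma zero: "\<phi> (\<lambda>j. 0) = 0"
  using homogeneous[OF finite_support_mem[of "{}" "\<lambda>j. 0"], of 0] by simp

lemma diff: "x \<in> V \<Longrightarrow> y \<in> V \<Longrightarrow> \<phi> (\<lambda>i. x i + - 1 * y i) = \<phi> x - \<phi> y"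
  using additive[OF _ scale_mem[of y "-1"]] homogeneous[of y "-1"] by simp

lemma finite_support:
  assumes "finite G"
  shows "\<phi> (\<lambda>j. if j \<in> G then y j else 0) = (\<Sum>i\<in>G. y i * unit_coeff \<phi> i)"
  using assms
proof (induction G rule: finite_induct)
  case empty
  then show ?case using zero by simp
next
  case (insert i G)
  let ?e = "\<lambda>j::'i. if j = i then 1 else (0::real)"
  have "(\<lambda>j. if j \<in> insert i G then y j else 0) =
        (\<lambda>j. (if j \<in> G then y j else 0) + y i * ?e j)"
    by (rule ext) (use insert.hyps in auto)
  moreover have "(\<lambda>j. if j \<in> G then y j else 0) \<in> V" "?e \<in> V"
    by (rule finite_support_mem[OF insert.hyps(1)], simp, rule finite_support_mem[of "{i}"], auto)
  ultimately show ?case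
    using insert by (simp add: additive scale_mem homogeneous unit_coeff_def)
qed

lemma split_off_finite:
  assumes "x \<in> V" and "finite G"
  shows "\<phi> x = (\<Sum>i\<in>G. x i * unit_coeff \<phi> i) + \<phi> (\<lambda>j. if j \<in> G then 0 else x j)"
proof -
  have "\<phi> x = \<phi> (\<lambda>i. (if i \<in> G then x i else 0) + (if i \<in> G then 0 else x i))"
    by (rule arg_cong[where f = \<phi>]) auto
  also have "\<dots> = \<phi> (\<lambda>j. if j \<in> G then x j else 0) + \<phi> (\<lambda>j. if j \<in> G then 0 else x j)"
    by (intro additive finite_support_mem[OF assms(2)] vanish_on_mem[OF assms(1)]) auto
  finally show ?thesis using finite_support[OF assms(2)] by simp
qed

text \<open>The part of \<open>\<phi>\<close> living on finitely many coordinates is continuous for the product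
  topology, so it suffices that the rest is uniformly small on differences of points of C.\<close>
lemma continuous_on_if_small_tails:
  assumes "C \<subseteq> V"
    and tail: "\<And>\<epsilon>. \<epsilon> > 0 \<Longrightarrow> \<exists>G. finite G \<and>
        (\<forall>g\<in>C. \<forall>f\<in>C. \<bar>\<phi> (\<lambda>j. if j \<in> G then 0 else g j + - 1 * f j)\<bar> \<le> \<epsilon>)"
  shows "continuous_on C \<phi>"
  unfolding continuous_on_topological
proof (intro ballI allI impI)
  fix f B assume fC: "f \<in> C" and "open B" and "\<phi> f \<in> B"
  then obtain e where "e > 0" and e: "ball (\<phi> f) e \<subseteq> B" using open_contains_ball by blast
  obtain G where G: "finite G"
    and t: "\<And>g. g \<in> C \<Longrightarrow> \<bar>\<phi> (\<lambda>j. if j \<in> G then 0 else g j + - 1 * f j)\<bar> \<le> e/2"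
    using tail[of "e/2"] \<open>e > 0\<close> fC by auto
  define S where "S = (\<Sum>i\<in>G. \<bar>unit_coeff \<phi> i\<bar>)"
  have "S \<ge> 0" unfolding S_def by (intro sum_nonneg) auto
  define \<delta> where "\<delta> = e / (2 * (S + 1))"
  have "\<delta> > 0" using \<open>e > 0\<close> \<open>S \<ge> 0\<close> by (simp add: \<delta>_def)
  have "\<delta> * S < e / 2"
    using \<open>e > 0\<close> \<open>S \<ge> 0\<close> by (simp add: \<delta>_def field_simps)
  define A where "A = {g. \<forall>i\<in>G. g ((\<lambda>i. i) i) \<in> ball (f i) \<delta>}"
  show "\<exists>A. open A \<and> f \<in> A \<and> (\<forall>g\<in>C. g \<in> A \<longrightarrow> \<phi> g \<in> B)"
  proof (intro exI conjI ballI impI)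
    show "open A" unfolding A_def by (rule product_topology_basis') (auto simp: G)
    show "f \<in> A" using \<open>\<delta> > 0\<close> by (simp add: A_def)
    fix g assume gC: "g \<in> C" and "g \<in> A"
    then have close: "\<bar>g i + - 1 * f i\<bar> \<le> \<delta>" if "i \<in> G" for i
      using that by (auto simp: A_def dist_real_def abs_minus_commute)
    have "\<bar>\<Sum>i\<in>G. (g i + - 1 * f i) * unit_coeff \<phi> i\<bar> \<le> (\<Sum>i\<in>G. \<delta> * \<bar>unit_coeff \<phi> i\<bar>)"
      using close by (intro order_trans[OF sum_abs] sum_mono) (simp add: abs_mult mult_right_mono)
    also have "\<dots> = \<delta> * S" by (simp add: S_def sum_distrib_left)
    moreover have "g \<in> V" "f \<in> V" using gC fC \<open>C \<subseteq> V\<close> by auto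
    ultimately have "\<bar>\<phi> (\<lambda>i. g i + - 1 * f i)\<bar> < e"
      using split_off_finite[OF diff_mem G, of g f] t[OF gC] \<open>\<delta> * S < e / 2\<close> by linarith
    then show "\<phi> g \<in> B"
      using diff[OF \<open>g \<in> V\<close> \<open>f \<in> V\<close>] e by (auto simp: dist_real_def)
  qed
qed

end

section \<open>The Banach space \<open>c\<^sub>0\<close>\<close>

lemma real_vector_space_on_pointwise:
  fixes V :: "('i \<Rightarrow> real) set"
  assumes "(\<lambda>i. 0) \<in> V" "\<And>x y. x \<in> V \<Longrightarrow> y \<in> V \<Longrightarrow> (\<lambda>i. x i + y i) \<in> V"
    "\<And>a x. x \<in> V \<Longrightarrow> (\<lambda>i. a * x i) \<in> V"
  shows "real_vector_space_on V (\<lambda>x y i. x i + y i) (\<lambda>a x i. a * x i) (\<lambda>i. 0)"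
  unfolding real_vector_space_on_def
proof (intro conjI ballI allI)
  fix x assume "x \<in> V"
  then show "\<exists>y\<in>V. (\<lambda>i. x i + y i) = (\<lambda>i. 0)"
    using assms(3)[of x "-1"] by (intro bexI[of _ "\<lambda>i. -1 * x i"]) auto
qed (auto intro: assms simp: algebra_simps)

definition c0 :: "('i \<Rightarrow> real) set" where
  "c0 = {x. \<forall>e>0. finite {i. e \<le> \<bar>x i\<bar>}}"

definition sup_norm :: "('i \<Rightarrow> real) \<Rightarrow> real" where
  "sup_norm x = (SUP i. \<bar>x i\<bar>)"

lemma c0_imp_bdd_above_abs:
  assumes "x \<in> c0" shows "bdd_above (range (\<lambda>i. \<bar>x i\<bar>))"
proof -
  define F where "F = {i. 1 \<le> \<bar>x i\<bar>}"
  have "finite F" using assms by (auto simp: c0_def F_def)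
  have "\<bar>x i\<bar> \<le> 1 + (\<Sum>j\<in>F. \<bar>x j\<bar>)" for i
  proof (cases "i \<in> F")
    case True
    then show ?thesis using member_le_sum[OF True _ \<open>finite F\<close>, of "\<lambda>j. \<bar>x j\<bar>"] by simp
  next
    case False
    then have "\<bar>x i\<bar> < 1" by (simp add: F_def)
    moreover have "0 \<le> (\<Sum>j\<in>F. \<bar>x j\<bar>)" by (simp add: sum_nonneg)
    ultimately show ?thesis by linarith
  qed
  then show ?thesis by (intro bdd_aboveI2) blast
qed

lemma c0_finite_level: "x \<in> c0 \<Longrightarrow> e > 0 \<Longrightarrow> finite {i. e \<le> \<bar>x i\<bar>}"
  unfolding c0_def by blast

lemma abs_le_sup_norm: "x \<in> c0 \<Longrightarrow> \<bar>x i\<bar> \<le> sup_norm x"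
  unfolding sup_norm_def by (rule cSUP_upper) (auto intro: c0_imp_bdd_above_abs)

lemma sup_norm_le: "(\<And>i. \<bar>x i\<bar> \<le> b) \<Longrightarrow> sup_norm x \<le> b"
  unfolding sup_norm_def by (rule cSUP_least) auto

lemma sup_norm_nonneg: "x \<in> c0 \<Longrightarrow> 0 \<le> sup_norm x"
  using abs_le_sup_norm[of x undefined] by linarith

lemma c0_finite_support:
  assumes "finite G" "\<And>j. j \<notin> G \<Longrightarrow> x j = 0" shows "x \<in> c0"
proof -
  have "{i. e \<le> \<bar>x i\<bar>} \<subseteq> G" if "e > 0" for e :: real
    using assms(2) that by force
  then show ?thesis using assms(1) by (auto simp: c0_def intro: finite_subset)
qed

lemma c0_zero: "(\<lambda>i. 0) \<in> c0"
  by (rule c0_finite_support[of "{}"]) auto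

lemma c0_abs_le:
  assumes "x \<in> c0" "\<And>j. \<bar>y j\<bar> \<le> \<bar>x j\<bar>" shows "y \<in> c0"
proof -
  have "{i. e \<le> \<bar>y i\<bar>} \<subseteq> {i. e \<le> \<bar>x i\<bar>}" for e :: real
    using assms(2) order_trans by blast
  then show ?thesis using assms(1) by (auto simp: c0_def intro: finite_subset)
qed

lemma c0_add:
  assumes "x \<in> c0" "y \<in> c0" shows "(\<lambda>i. x i + y i) \<in> c0"
  unfolding c0_def
proof (intro CollectI allI impI)
  fix e :: real assume "e > 0"
  have "{i. e \<le> \<bar>x i + y i\<bar>} \<subseteq> {i. e/2 \<le> \<bar>x i\<bar>} \<union> {i. e/2 \<le> \<bar>y i\<bar>}" by auto
  moreover have "finite ({i. e/2 \<le> \<bar>x i\<bar>} \<union> {i. e/2 \<le> \<bar>y i\<bar>})"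
    using \<open>e > 0\<close> by (intro finite_UnI c0_finite_level[OF assms(1)] c0_finite_level[OF assms(2)]) simp_all
  ultimately show "finite {i. e \<le> \<bar>x i + y i\<bar>}" by (rule finite_subset)
qed

lemma c0_scale:
  assumes "x \<in> c0" shows "(\<lambda>i. a * x i) \<in> c0"
proof (cases "a = 0")
  case True then show ?thesis by (simp add: c0_zero)
next
  case False
  then have "{i. e \<le> \<bar>a * x i\<bar>} = {i. e / \<bar>a\<bar> \<le> \<bar>x i\<bar>}" for e
    by (auto simp: abs_mult field_simps)
  with assms False show ?thesis by (auto simp: c0_def)
qed

lemma sup_norm_eq_0_iff: "x \<in> c0 \<Longrightarrow> sup_norm x = 0 \<longleftrightarrow> x = (\<lambda>i. 0)"
  using abs_le_sup_norm[of x] by (auto simp: sup_norm_def)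

lemma sup_norm_scale:
  assumes "x \<in> c0" shows "sup_norm (\<lambda>i. a * x i) = \<bar>a\<bar> * sup_norm x"
proof (cases "a = 0")
  case True then show ?thesis by (simp add: sup_norm_def)
next
  case False
  have "sup_norm (\<lambda>i. a * x i) \<le> \<bar>a\<bar> * sup_norm x"
    using abs_le_sup_norm[OF assms] by (intro sup_norm_le) (simp add: abs_mult mult_left_mono)
  moreover have "sup_norm x \<le> sup_norm (\<lambda>i. a * x i) / \<bar>a\<bar>"
    using abs_le_sup_norm[OF c0_scale[OF assms, of a]] False
    by (intro sup_norm_le) (simp add: abs_mult field_simps)
  ultimately show ?thesis using False by (simp add: field_simps)
qed

lemma sup_norm_triangle:
  "x \<in> c0 \<Longrightarrow> y \<in> c0 \<Longrightarrow> sup_norm (\<lambda>i. x i + y i) \<le> sup_norm x + sup_norm y"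
  using abs_le_sup_norm[of x] abs_le_sup_norm[of y]
  by (intro sup_norm_le) (meson abs_triangle_ineq add_mono order_trans)

lemma uniformly_Cauchy_imp_uniform_limit:
  fixes s :: "nat \<Rightarrow> 'i \<Rightarrow> real"
  assumes Cauchy: "\<forall>e>0. \<exists>N. \<forall>m\<ge>N. \<forall>n\<ge>N. \<forall>i. \<bar>s m i - s n i\<bar> < e"
  shows "\<exists>l. \<forall>e>0. \<exists>N. \<forall>n\<ge>N. \<forall>i. \<bar>s n i - l i\<bar> \<le> e"
proof -
  have "Cauchy (\<lambda>n. s n i)" for i
  proof (rule CauchyI)
    fix e :: real assume "e > 0"
    then obtain N where "\<forall>m\<ge>N. \<forall>n\<ge>N. \<forall>i. \<bar>s m i - s n i\<bar> < e" using Cauchy by blast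
    then show "\<exists>N. \<forall>m\<ge>N. \<forall>n\<ge>N. norm (s m i - s n i) < e" by auto
  qed
  then obtain l where l: "\<And>i. (\<lambda>n. s n i) \<longlonglongrightarrow> l i"
    unfolding Cauchy_convergent_iff convergent_def by metis
  have "\<exists>N. \<forall>n\<ge>N. \<forall>i. \<bar>s n i - l i\<bar> \<le> e" if "e > 0" for e
  proof -
    obtain N where N: "\<forall>m\<ge>N. \<forall>n\<ge>N. \<forall>i. \<bar>s m i - s n i\<bar> < e" using Cauchy \<open>e > 0\<close> by blast
    have "\<bar>s n i - l i\<bar> \<le> e" if "n \<ge> N" for n i
    proof (rule LIMSEQ_le_const2)
      show "(\<lambda>m. \<bar>s n i - s m i\<bar>) \<longlonglongrightarrow> \<bar>s n i - l i\<bar>"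
        by (intro tendsto_intros l)
      show "\<exists>M. \<forall>m\<ge>M. \<bar>s n i - s m i\<bar> \<le> e"
      proof (intro exI[of _ N] allI impI)
        fix m assume "m \<ge> N"
        then show "\<bar>s n i - s m i\<bar> \<le> e" using N \<open>n \<ge> N\<close> by (simp add: less_imp_le)
      qed
    qed
    then show ?thesis by blast
  qed
  then show ?thesis by blast
qed

lemma c0_if_uniformly_approximable:
  assumes "\<And>e. e > 0 \<Longrightarrow> \<exists>x\<in>c0. \<forall>i. \<bar>x i - y i\<bar> \<le> e"
  shows "y \<in> c0"
  unfolding c0_def
proof (intro CollectI allI impI)
  fix e :: real assume "e > 0"
  then obtain x where "x \<in> c0" and x: "\<And>i. \<bar>x i - y i\<bar> \<le> e/2" using assms[of "e/2"] by auto
  have "{i. e \<le> \<bar>y i\<bar>} \<subseteq> {i. e/2 \<le> \<bar>x i\<bar>}"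
  proof
    fix i assume "i \<in> {i. e \<le> \<bar>y i\<bar>}"
    then show "i \<in> {i. e/2 \<le> \<bar>x i\<bar>}"
      using x[of i] abs_triangle_ineq2[of "y i" "x i"] abs_minus_commute[of "y i" "x i"] by simp
  qed
  moreover have "finite {i. e/2 \<le> \<bar>x i\<bar>}"
    using \<open>e > 0\<close> by (intro c0_finite_level[OF \<open>x \<in> c0\<close>]) simp
  ultimately show "finite {i. e \<le> \<bar>y i\<bar>}" by (rule finite_subset)
qed

lemma c0_complete:
  fixes s :: "nat \<Rightarrow> 'i \<Rightarrow> real"
  assumes c0: "\<And>n. s n \<in> c0"
    and Cauchy: "\<forall>e>0. \<exists>N. \<forall>m\<ge>N. \<forall>n\<ge>N. sup_norm (\<lambda>i. s m i + - 1 * s n i) < e"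
  shows "\<exists>l\<in>c0. (\<lambda>n. sup_norm (\<lambda>i. s n i + - 1 * l i)) \<longlonglongrightarrow> 0"
proof -
  have pointwise: "\<bar>s m i - s n i\<bar> \<le> sup_norm (\<lambda>i. s m i + - 1 * s n i)" for m n i
    using abs_le_sup_norm[OF c0_add[OF c0[of m] c0_scale[OF c0[of n], of "-1"]], of i] by simp
  have "\<forall>e>0. \<exists>N. \<forall>m\<ge>N. \<forall>n\<ge>N. \<forall>i. \<bar>s m i - s n i\<bar> < e"
  proof (intro allI impI)
    fix e :: real assume "e > 0"
    then obtain N where N: "\<forall>m\<ge>N. \<forall>n\<ge>N. sup_norm (\<lambda>i. s m i + - 1 * s n i) < e"
      using Cauchy by blast
    show "\<exists>N. \<forall>m\<ge>N. \<forall>n\<ge>N. \<forall>i. \<bar>s m i - s n i\<bar> < e"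
    proof (intro exI[of _ N] allI impI)
      fix m n i assume "m \<ge> N" "n \<ge> N"
      then show "\<bar>s m i - s n i\<bar> < e" using N pointwise[of m i n] by force
    qed
  qed
  then obtain l where uniform: "\<forall>e>0. \<exists>N. \<forall>n\<ge>N. \<forall>i. \<bar>s n i - l i\<bar> \<le> e"
    by (blast dest: uniformly_Cauchy_imp_uniform_limit)
  have "l \<in> c0"
  proof (rule c0_if_uniformly_approximable)
    fix e :: real assume "e > 0"
    then obtain N where "\<forall>i. \<bar>s N i - l i\<bar> \<le> e" using uniform by blast
    then show "\<exists>x\<in>c0. \<forall>i. \<bar>x i - l i\<bar> \<le> e" using c0[of N] by blast
  qed
  moreover have "(\<lambda>n. sup_norm (\<lambda>i. s n i + - 1 * l i)) \<longlonglongrightarrow> 0"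
  proof (rule LIMSEQ_I)
    fix r :: real assume "r > 0"
    then obtain N where N: "\<forall>n\<ge>N. \<forall>i. \<bar>s n i - l i\<bar> \<le> r/2" using uniform[rule_format, of "r/2"] \<open>r > 0\<close> by auto
    have "norm (sup_norm (\<lambda>i. s n i + - 1 * l i)) < r" if "n \<ge> N" for n
      using N that \<open>r > 0\<close> sup_norm_le[of "\<lambda>i. s n i + - 1 * l i" "r/2"]
        sup_norm_nonneg[OF c0_add[OF c0 c0_scale[OF \<open>l \<in> c0\<close>]], of n "-1"]
      by auto
    then show "\<exists>N. \<forall>n\<ge>N. norm (sup_norm (\<lambda>i. s n i + - 1 * l i) - 0) < r" by auto
  qed
  ultimately show ?thesis by blast
qed

lemma banach_space_on_c0:
  "banach_space_on c0 (\<lambda>x y i. x i + y i) (\<lambda>a x i. a * x i) (\<lambda>i. 0) sup_norm"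
  unfolding banach_space_on_def
proof (intro conjI)
  show "real_vector_space_on c0 (\<lambda>x y i. x i + y i) (\<lambda>a x i. a * x i) (\<lambda>i. 0)"
    by (rule real_vector_space_on_pointwise) (auto intro: c0_zero c0_add c0_scale)
  show "\<forall>s. (\<forall>n. s n \<in> c0) \<and>
      (\<forall>e>0. \<exists>N. \<forall>m\<ge>N. \<forall>n\<ge>N. sup_norm (\<lambda>i. s m i + - 1 * s n i) < e) \<longrightarrow>
      (\<exists>l\<in>c0. (\<lambda>n. sup_norm (\<lambda>i. s n i + - 1 * l i)) \<longlonglongrightarrow> 0)"
    using c0_complete by blast
qed (simp_all add: sup_norm_nonneg sup_norm_eq_0_iff sup_norm_scale sup_norm_triangle)

lemma pointwise_linear_functional_c0:
  assumes "bounded_linear_functional_on c0 (\<lambda>x y i. x i + y i) (\<lambda>a x i. a * x i) sup_norm \<phi>"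
  shows "pointwise_linear_functional c0 \<phi>"
proof
  show "\<And>G x. x \<in> c0 \<Longrightarrow> (\<lambda>j. if j \<in> G then 0 else x j) \<in> c0"
    by (rule c0_abs_le) auto
qed (use assms in \<open>auto simp: bounded_linear_functional_on_def
    intro: c0_finite_support c0_add c0_scale\<close>)

context
  fixes \<phi> :: "('i \<Rightarrow> real) \<Rightarrow> real" and k :: real
  assumes linear: "pointwise_linear_functional c0 \<phi>"
    and bound: "\<And>x. x \<in> c0 \<Longrightarrow> \<bar>\<phi> x\<bar> \<le> k * sup_norm x" and "k \<ge> 0"
begin

interpretation pointwise_linear_functional c0 \<phi> by (fact linear)

text \<open>Test \<open>\<phi>\<close> on the finitely supported vector of signs of its coefficients.\<close>
lemma c0_unit_coeff_abs_sum_le: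
  assumes "finite G"
  shows "(\<Sum>i\<in>G. \<bar>unit_coeff \<phi> i\<bar>) \<le> k"
proof -
  define y where "y = (\<lambda>j. if j \<in> G then sgn (unit_coeff \<phi> j) else 0)"
  have "y \<in> c0" unfolding y_def by (rule c0_finite_support[OF assms]) auto
  have "sup_norm y \<le> 1" unfolding y_def by (rule sup_norm_le) (auto simp: sgn_if)
  have "(\<Sum>i\<in>G. \<bar>unit_coeff \<phi> i\<bar>) = \<phi> y"
    unfolding y_def finite_support[OF assms] by (intro sum.cong) (auto simp: sgn_if)
  also have "\<dots> \<le> k * sup_norm y" using bound[OF \<open>y \<in> c0\<close>] by linarith
  also have "\<dots> \<le> k" using \<open>sup_norm y \<le> 1\<close> \<open>k \<ge> 0\<close> mult_left_mono[of _ 1 k] by simp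
  finally show ?thesis .
qed

text \<open>Split x into its finitely many large coordinates, where the small coefficient sum off
  \<open>G0\<close> applies, and a remainder of small sup norm.\<close>
lemma c0_functional_bound_off:
  assumes "x \<in> c0" and "\<And>j. j \<in> G0 \<Longrightarrow> x j = 0" and "\<And>j. \<bar>x j\<bar> \<le> b"
    and small: "\<And>G. finite G \<Longrightarrow> G \<inter> G0 = {} \<Longrightarrow> (\<Sum>i\<in>G. \<bar>unit_coeff \<phi> i\<bar>) \<le> \<epsilon>"
  shows "\<bar>\<phi> x\<bar> \<le> b * \<epsilon>"
proof (rule field_le_epsilon)
  fix \<eta> :: real assume "\<eta> > 0"
  define r where "r = \<eta> / (k + 1)"
  have "r > 0" and "k * r \<le> \<eta>"
    using \<open>\<eta> > 0\<close> \<open>k \<ge> 0\<close> by (auto simp: r_def field_simps)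
  define G where "G = {j. r \<le> \<bar>x j\<bar>}"
  have "finite G" using c0_finite_level[OF \<open>x \<in> c0\<close> \<open>r > 0\<close>] by (simp add: G_def)
  have "G \<inter> G0 = {}" using assms(2) \<open>r > 0\<close> by (force simp: G_def)
  have "0 \<le> b" using assms(3) abs_ge_zero order_trans by blast
  have "\<bar>\<Sum>i\<in>G. x i * unit_coeff \<phi> i\<bar> \<le> (\<Sum>i\<in>G. b * \<bar>unit_coeff \<phi> i\<bar>)"
    by (intro order_trans[OF sum_abs] sum_mono) (simp add: abs_mult mult_right_mono assms(3))
  also have "\<dots> \<le> b * \<epsilon>"
    using small[OF \<open>finite G\<close> \<open>G \<inter> G0 = {}\<close>] \<open>0 \<le> b\<close>
    by (simp add: sum_distrib_left[symmetric] mult_left_mono)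
  finally have large: "\<bar>\<Sum>i\<in>G. x i * unit_coeff \<phi> i\<bar> \<le> b * \<epsilon>" .
  have "(\<lambda>j. if j \<in> G then 0 else x j) \<in> c0" by (rule vanish_on_mem[OF \<open>x \<in> c0\<close>])
  moreover have "sup_norm (\<lambda>j. if j \<in> G then 0 else x j) \<le> r"
    using \<open>r > 0\<close> by (intro sup_norm_le) (auto simp: G_def)
  ultimately have "\<bar>\<phi> (\<lambda>j. if j \<in> G then 0 else x j)\<bar> \<le> \<eta>"
    using bound \<open>k \<ge> 0\<close> \<open>k * r \<le> \<eta>\<close> by (meson mult_left_mono order_trans)
  then show "\<bar>\<phi> x\<bar> \<le> b * \<epsilon> + \<eta>"
    using split_off_finite[OF \<open>x \<in> c0\<close> \<open>finite G\<close>] large by linarith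
qed

end

lemma c0_functional_continuous_on_bounded:
  assumes "bounded_linear_functional_on c0 (\<lambda>x y i. x i + y i) (\<lambda>a x i. a * x i) sup_norm \<phi>"
    and "C \<subseteq> c0" and M: "\<And>x i. x \<in> C \<Longrightarrow> \<bar>x i\<bar> \<le> M"
  shows "continuous_on C \<phi>"
proof -
  interpret pointwise_linear_functional c0 \<phi>
    using assms(1) by (rule pointwise_linear_functional_c0)
  obtain k where "k \<ge> 0" and bound: "\<And>x. x \<in> c0 \<Longrightarrow> \<bar>\<phi> x\<bar> \<le> k * sup_norm x"
    using bounded_linear_functional_on_nonneg_bound[OF assms(1)] sup_norm_nonneg by blast
  note coeff_bounds = c0_unit_coeff_abs_sum_le[OF pointwise_linear_functional_axioms bound \<open>k \<ge> 0\<close>]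
    and off_bound = c0_functional_bound_off[OF pointwise_linear_functional_axioms bound \<open>k \<ge> 0\<close>]
  define M' where "M' = max M 0"
  have diff_bound: "\<bar>if j \<in> G then 0 else g j + - 1 * f j\<bar> \<le> 2 * M'" if "g \<in> C" "f \<in> C" for g f G j
    using M[OF that(1), of j] M[OF that(2), of j] max.cobounded1[of M 0] max.cobounded2[of 0 M]
    by (simp add: M'_def abs_le_iff)
  show ?thesis
  proof (rule continuous_on_if_small_tails[OF \<open>C \<subseteq> c0\<close>])
    fix \<epsilon> :: real assume "\<epsilon> > 0"
    then have "\<epsilon> / (2 * M' + 1) > 0" by (simp add: M'_def)
    then obtain G0 where "finite G0"
      and small: "\<And>G. finite G \<Longrightarrow> G \<inter> G0 = {} \<Longrightarrow> (\<Sum>i\<in>G. \<bar>unit_coeff \<phi> i\<bar>) \<le> \<epsilon> / (2 * M' + 1)"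
      using bounded_finite_sums_imp_small_tails[OF coeff_bounds] by metis
    have "2 * M' * (\<epsilon> / (2 * M' + 1)) \<le> \<epsilon>"
      using \<open>\<epsilon> > 0\<close> by (simp add: M'_def field_simps)
    moreover have "\<bar>\<phi> (\<lambda>j. if j \<in> G0 then 0 else g j + - 1 * f j)\<bar> \<le> 2 * M' * (\<epsilon> / (2 * M' + 1))"
      if "g \<in> C" "f \<in> C" for g f
      using that \<open>C \<subseteq> c0\<close> diff_bound[OF that]
      by (intro off_bound vanish_on_mem diff_mem small) auto
    ultimately show "\<exists>G. finite G \<and>
        (\<forall>g\<in>C. \<forall>f\<in>C. \<bar>\<phi> (\<lambda>j. if j \<in> G then 0 else g j + - 1 * f j)\<bar> \<le> \<epsilon>)"
      using \<open>finite G0\<close> by (meson order_trans)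
  qed
qed

lemma Hausdorff_space_fun_euclidean: "Hausdorff_space (euclidean :: ('i \<Rightarrow> real) topology)"
  by (metis Hausdorff_space_euclidean Hausdorff_space_product_topology euclidean_product_topology)

lemma eberlein_compact_if_bounded_compact_in_c0:
  fixes C :: "('i \<Rightarrow> real) set"
  assumes "compact C" and "C \<subseteq> c0" and "\<And>x i. x \<in> C \<Longrightarrow> \<bar>x i\<bar> \<le> M"
  shows "eberlein_compact TYPE('i \<Rightarrow> real) (top_of_set C)"
  unfolding eberlein_compact_def
proof (intro conjI exI)
  show "compact_space (top_of_set C)"
    using assms(1) by (simp add: compact_space_subtopology)
  show "Hausdorff_space (top_of_set C)"
    using Hausdorff_space_fun_euclidean by (rule Hausdorff_space_subtopology)
  show "banach_space_on c0 (\<lambda>x y i. x i + y i) (\<lambda>a x i. a * x i) (\<lambda>i. 0) sup_norm"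
    by (rule banach_space_on_c0)
  have "continuous_on C \<phi>"
    if "bounded_linear_functional_on c0 (\<lambda>x y i. x i + y i) (\<lambda>a x i. a * x i) sup_norm \<phi>" for \<phi>
    using that assms(2,3) by (rule c0_functional_continuous_on_bounded)
  note weak = weak_topology_on_agrees_on_compact[where nrm = sup_norm, OF assms(2,1) abs_le_sup_norm this]
  show "compactin (weak_topology_on c0 (\<lambda>x y i. x i + y i) (\<lambda>a x i. a * x i) sup_norm) C"
    by (rule weak(1))
  show "homeomorphic_map (top_of_set C)
      (subtopology (weak_topology_on c0 (\<lambda>x y i. x i + y i) (\<lambda>a x i. a * x i) sup_norm) C) id"
    by (rule weak(2))
qed (rule assms(2))

section \<open>The Hilbert space \<open>\<ell>\<^sub>2\<close>\<close>

definition l2 :: "('i \<Rightarrow> real) set" where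
  "l2 = {x. (\<lambda>i. (x i)\<^sup>2) summable_on UNIV}"

definition l2_inner :: "('i \<Rightarrow> real) \<Rightarrow> ('i \<Rightarrow> real) \<Rightarrow> real" where
  "l2_inner x y = (\<Sum>\<^sub>\<infinity>i. x i * y i)"

lemma l2_inner_self_nonneg: "0 \<le> l2_inner x x"
  unfolding l2_inner_def by (rule infsum_nonneg) simp

lemma sum_squares_le_l2_inner: "x \<in> l2 \<Longrightarrow> finite F \<Longrightarrow> (\<Sum>i\<in>F. (x i)\<^sup>2) \<le> l2_inner x x"
  unfolding l2_inner_def l2_def power2_eq_square by (rule finite_sum_le_infsum) auto

lemma abs_le_l2_norm:
  assumes "x \<in> l2" shows "\<bar>x i\<bar> \<le> sqrt (l2_inner x x)"
proof -
  have "(x i)\<^sup>2 \<le> l2_inner x x" using sum_squares_le_l2_inner[OF assms, of "{i}"] by simp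
  then show ?thesis by (metis real_sqrt_abs real_sqrt_le_mono)
qed

lemma l2_if_bounded_sum_squares:
  assumes "\<And>F. finite F \<Longrightarrow> (\<Sum>i\<in>F. (x i)\<^sup>2) \<le> B"
  shows "x \<in> l2" and "l2_inner x x \<le> B"
proof -
  have summable: "(\<lambda>i. (x i)\<^sup>2) summable_on UNIV"
    by (rule nonneg_bdd_above_summable_on) (use assms in \<open>auto intro!: bdd_aboveI2\<close>)
  then show "x \<in> l2" by (simp add: l2_def)
  show "l2_inner x x \<le> B"
    unfolding l2_inner_def using summable assms
    by (intro infsum_le_finite_sums) (auto simp: power2_eq_square)
qed

lemma l2_finite_support: "finite G \<Longrightarrow> (\<And>j. j \<notin> G \<Longrightarrow> x j = 0) \<Longrightarrow> x \<in> l2"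
  unfolding l2_def
  by (intro CollectI finite_nonzero_values_imp_summable_on) (auto intro: finite_subset)

lemma l2_zero: "(\<lambda>i. 0) \<in> l2"
  by (simp add: l2_def)

lemma l2_abs_le:
  assumes "x \<in> l2" "\<And>j. \<bar>y j\<bar> \<le> \<bar>x j\<bar>" shows "y \<in> l2"
  unfolding l2_def
proof (rule CollectI, rule summable_on_comparison_test)
  show "(\<lambda>i. (x i)\<^sup>2) summable_on UNIV" using assms(1) by (simp add: l2_def)
  show "(y i)\<^sup>2 \<le> (x i)\<^sup>2" for i
    using assms(2)[of i] by (metis abs_ge_zero power2_abs power_mono)
qed simp

lemma l2_scale:
  assumes "x \<in> l2" shows "(\<lambda>i. a * x i) \<in> l2"
proof -
  have "(\<lambda>i. a\<^sup>2 * (x i)\<^sup>2) summable_on UNIV"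
    using assms unfolding l2_def by (intro summable_on_cmult_right) simp
  then show ?thesis unfolding l2_def by (simp add: power_mult_distrib)
qed

lemma l2_add:
  assumes "x \<in> l2" "y \<in> l2" shows "(\<lambda>i. x i + y i) \<in> l2"
  unfolding l2_def
proof (rule CollectI, rule summable_on_comparison_test)
  show "(\<lambda>i. 2 * (x i)\<^sup>2 + 2 * (y i)\<^sup>2) summable_on UNIV"
    using assms by (intro summable_on_add summable_on_cmult_right) (auto simp: l2_def)
  show "(x i + y i)\<^sup>2 \<le> 2 * (x i)\<^sup>2 + 2 * (y i)\<^sup>2" for i
    using sum_squares_ge_zero[of "x i - y i" 0] by (simp add: power2_eq_square algebra_simps)
qed simp

lemma l2_mult_summable:
  assumes "x \<in> l2" "y \<in> l2" shows "(\<lambda>i. x i * y i) summable_on UNIV"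
proof -
  have "(\<lambda>i. (x i)\<^sup>2 + (y i)\<^sup>2) summable_on UNIV"
    using assms by (intro summable_on_add) (auto simp: l2_def)
  then have "(\<lambda>i. norm ((x i)\<^sup>2 + (y i)\<^sup>2)) summable_on UNIV" by simp
  moreover have "norm (x i * y i) \<le> norm ((x i)\<^sup>2 + (y i)\<^sup>2)" for i
  proof -
    have "2 * \<bar>x i * y i\<bar> \<le> (x i)\<^sup>2 + (y i)\<^sup>2"
      using sum_squares_ge_zero[of "\<bar>x i\<bar> - \<bar>y i\<bar>" 0]
      by (simp add: power2_eq_square algebra_simps abs_mult)
    then show ?thesis by simp
  qed
  ultimately have "(\<lambda>i. norm (x i * y i)) summable_on UNIV"
    by (rule Infinite_Sum.abs_summable_on_comparison_test)
  then show ?thesis by (rule Infinite_Sum.abs_summable_summable)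
qed

lemma l2_inner_commute: "l2_inner x y = l2_inner y x"
  unfolding l2_inner_def by (simp add: mult.commute)

lemma l2_inner_add_left:
  "x \<in> l2 \<Longrightarrow> y \<in> l2 \<Longrightarrow> z \<in> l2 \<Longrightarrow> l2_inner (\<lambda>i. x i + y i) z = l2_inner x z + l2_inner y z"
  unfolding l2_inner_def distrib_right by (intro infsum_add l2_mult_summable)

lemma l2_inner_scale_left: "x \<in> l2 \<Longrightarrow> y \<in> l2 \<Longrightarrow> l2_inner (\<lambda>i. a * x i) y = a * l2_inner x y"
  unfolding l2_inner_def mult.assoc by (rule infsum_cmult_right) (rule l2_mult_summable)

lemma l2_inner_Cauchy_Schwarz:
  assumes x: "x \<in> l2" and y: "y \<in> l2"
  shows "\<bar>l2_inner x y\<bar> \<le> sqrt (l2_inner x x) * sqrt (l2_inner y y)"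
proof -
  let ?B = "sqrt (l2_inner x x) * sqrt (l2_inner y y)"
  have finite_sums: "\<bar>\<Sum>i\<in>F. x i * y i\<bar> \<le> ?B" if "finite F" for F
  proof -
    have "\<bar>\<Sum>i\<in>F. x i * y i\<bar> \<le> (\<Sum>i\<in>F. \<bar>x i\<bar> * \<bar>y i\<bar>)"
      by (rule order_trans[OF sum_abs]) (simp add: abs_mult)
    also have "\<dots> \<le> L2_set x F * L2_set y F" by (rule L2_set_mult_ineq)
    also have "\<dots> \<le> ?B"
      unfolding L2_set_def
      by (intro mult_mono real_sqrt_le_mono sum_squares_le_l2_inner x y that)
        (auto simp: l2_inner_self_nonneg sum_nonneg)
    finally show ?thesis .
  qed
  have summable: "(\<lambda>i. x i * y i) summable_on UNIV" by (rule l2_mult_summable[OF x y])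
  have "(\<Sum>\<^sub>\<infinity>i. x i * y i) \<le> ?B"
  proof (rule infsum_le_finite_sums[OF summable])
    show "(\<Sum>i\<in>F. x i * y i) \<le> ?B" if "finite F" "F \<subseteq> UNIV" for F
      using finite_sums[OF that(1)] by linarith
  qed
  moreover have "(\<Sum>\<^sub>\<infinity>i. - (x i * y i)) \<le> ?B"
  proof (rule infsum_le_finite_sums[OF summable_on_uminus[THEN iffD2, OF summable]])
    show "(\<Sum>i\<in>F. - (x i * y i)) \<le> ?B" if "finite F" "F \<subseteq> UNIV" for F
      using finite_sums[OF that(1)] by (simp add: sum_negf)
  qed
  ultimately have "l2_inner x y \<le> ?B" "- l2_inner x y \<le> ?B"
    by (simp_all add: l2_inner_def infsum_uminus)
  then show ?thesis by linarith
qed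

lemma l2_norm_triangle:
  assumes x: "x \<in> l2" and y: "y \<in> l2"
  shows "sqrt (l2_inner (\<lambda>i. x i + y i) (\<lambda>i. x i + y i)) \<le> sqrt (l2_inner x x) + sqrt (l2_inner y y)"
proof -
  have xy: "(\<lambda>i. x i + y i) \<in> l2" by (rule l2_add[OF x y])
  have "l2_inner (\<lambda>i. x i + y i) (\<lambda>i. x i + y i) =
      l2_inner x (\<lambda>i. x i + y i) + l2_inner y (\<lambda>i. x i + y i)"
    by (rule l2_inner_add_left[OF x y xy])
  also have "\<dots> = l2_inner x x + 2 * l2_inner x y + l2_inner y y"
    by (simp only: l2_inner_commute[of _ "\<lambda>i. x i + y i"] l2_inner_add_left[OF x y x]
        l2_inner_add_left[OF x y y] l2_inner_commute[of y x])
  also have "\<dots> \<le> (sqrt (l2_inner x x) + sqrt (l2_inner y y))\<^sup>2"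
    using l2_inner_Cauchy_Schwarz[OF x y] l2_inner_self_nonneg[of x] l2_inner_self_nonneg[of y]
    by (simp add: power2_eq_square algebra_simps)
  finally have "sqrt (l2_inner (\<lambda>i. x i + y i) (\<lambda>i. x i + y i)) \<le>
      sqrt ((sqrt (l2_inner x x) + sqrt (l2_inner y y))\<^sup>2)"
    by (rule real_sqrt_le_mono)
  then show ?thesis by (simp add: l2_inner_self_nonneg)
qed

lemma l2_norm_scale:
  assumes "x \<in> l2"
  shows "sqrt (l2_inner (\<lambda>i. a * x i) (\<lambda>i. a * x i)) = \<bar>a\<bar> * sqrt (l2_inner x x)"
proof -
  have "l2_inner (\<lambda>i. a * x i) (\<lambda>i. a * x i) = a * (a * l2_inner x x)"
    using l2_inner_scale_left[OF assms l2_scale[OF assms], of a] l2_inner_commute[of x "\<lambda>i. a * x i"]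
      l2_inner_scale_left[OF assms assms, of a]
    by simp
  then have "l2_inner (\<lambda>i. a * x i) (\<lambda>i. a * x i) = a\<^sup>2 * l2_inner x x"
    by (simp add: power2_eq_square)
  then show ?thesis by (simp add: real_sqrt_mult)
qed

lemma l2_norm_eq_0_iff: "x \<in> l2 \<Longrightarrow> sqrt (l2_inner x x) = 0 \<longleftrightarrow> x = (\<lambda>i. 0)"
proof
  assume "x \<in> l2" and "sqrt (l2_inner x x) = 0"
  then have "\<bar>x i\<bar> \<le> 0" for i using abs_le_l2_norm[of x i] by simp
  then show "x = (\<lambda>i. 0)" by (intro ext) simp
qed (simp add: l2_inner_def)

lemma l2_le_if_pointwise_limit:
  fixes x :: "nat \<Rightarrow> 'i \<Rightarrow> real"
  assumes "\<And>i. (\<lambda>m. x m i) \<longlonglongrightarrow> y i"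
    and bound: "\<And>m. m \<ge> N \<Longrightarrow> x m \<in> l2 \<and> l2_inner (x m) (x m) \<le> B"
  shows "y \<in> l2" and "l2_inner y y \<le> B"
proof -
  have "(\<Sum>i\<in>F. (y i)\<^sup>2) \<le> B" if "finite F" for F
  proof (rule LIMSEQ_le_const2)
    show "(\<lambda>m. \<Sum>i\<in>F. (x m i)\<^sup>2) \<longlonglongrightarrow> (\<Sum>i\<in>F. (y i)\<^sup>2)"
      by (intro tendsto_intros assms(1))
    have "(\<Sum>i\<in>F. (x m i)\<^sup>2) \<le> B" if "m \<ge> N" for m
      using sum_squares_le_l2_inner[OF _ \<open>finite F\<close>, of "x m"] bound[OF that] by linarith
    then show "\<exists>M. \<forall>m\<ge>M. (\<Sum>i\<in>F. (x m i)\<^sup>2) \<le> B" by blast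
  qed
  from l2_if_bounded_sum_squares[OF this] show "y \<in> l2" and "l2_inner y y \<le> B" by simp_all
qed

lemma l2_complete:
  fixes s :: "nat \<Rightarrow> 'i \<Rightarrow> real"
  defines "d m n \<equiv> \<lambda>i. s m i + - 1 * s n i"
  assumes l2: "\<And>n. s n \<in> l2"
    and Cauchy: "\<forall>e>0. \<exists>N. \<forall>m\<ge>N. \<forall>n\<ge>N. sqrt (l2_inner (d m n) (d m n)) < e"
  shows "\<exists>l\<in>l2. (\<lambda>n. sqrt (l2_inner (\<lambda>i. s n i + - 1 * l i) (\<lambda>i. s n i + - 1 * l i))) \<longlonglongrightarrow> 0"
proof -
  have d: "d m n \<in> l2" for m n unfolding d_def by (intro l2_add l2_scale l2)
  have "Cauchy (\<lambda>n. s n i)" for i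
  proof (rule CauchyI)
    fix e :: real assume "e > 0"
    then obtain N where N: "\<forall>m\<ge>N. \<forall>n\<ge>N. sqrt (l2_inner (d m n) (d m n)) < e"
      using Cauchy by blast
    show "\<exists>N. \<forall>m\<ge>N. \<forall>n\<ge>N. norm (s m i - s n i) < e"
    proof (intro exI[of _ N] allI impI)
      fix m n assume "m \<ge> N" "n \<ge> N"
      then show "norm (s m i - s n i) < e"
        using N abs_le_l2_norm[OF d, of m n i] by (force simp: d_def)
    qed
  qed
  then obtain l where l: "\<And>i. (\<lambda>n. s n i) \<longlonglongrightarrow> l i"
    unfolding Cauchy_convergent_iff convergent_def by metis
  define r where "r n = (\<lambda>i. s n i + - 1 * l i)" for n
  have uniform: "\<exists>N. \<forall>n\<ge>N. r n \<in> l2 \<and> sqrt (l2_inner (r n) (r n)) \<le> e" if "e > 0" for e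
  proof -
    obtain N where N: "\<forall>m\<ge>N. \<forall>n\<ge>N. sqrt (l2_inner (d m n) (d m n)) < e"
      using Cauchy \<open>e > 0\<close> by blast
    have "r n \<in> l2 \<and> l2_inner (r n) (r n) \<le> e\<^sup>2" if "n \<ge> N" for n
    proof -
      have "(\<lambda>m. d n m i) \<longlonglongrightarrow> r n i" for i
        unfolding d_def r_def by (intro tendsto_intros l)
      moreover have "d n m \<in> l2 \<and> l2_inner (d n m) (d n m) \<le> e\<^sup>2" if "m \<ge> N" for m
      proof -
        have "sqrt (l2_inner (d n m) (d n m)) < e" using N \<open>n \<ge> N\<close> that by blast
        then have "l2_inner (d n m) (d n m) < e\<^sup>2"
          using real_sqrt_less_iff[of "l2_inner (d n m) (d n m)" "e\<^sup>2"] \<open>e > 0\<close> by simp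
        then show ?thesis using d by simp
      qed
      ultimately show ?thesis
        using l2_le_if_pointwise_limit[where x = "d n" and y = "r n"] by blast
    qed
    then have "r n \<in> l2 \<and> sqrt (l2_inner (r n) (r n)) \<le> e" if "n \<ge> N" for n
      using that \<open>e > 0\<close> real_le_lsqrt[of e "l2_inner (r n) (r n)"] by auto
    then show ?thesis by blast
  qed
  then obtain N1 where "r N1 \<in> l2" using zero_less_one by blast
  then have "(\<lambda>i. s N1 i + - 1 * r N1 i) \<in> l2" by (rule l2_add[OF l2 l2_scale])
  then have "l \<in> l2" by (simp add: r_def)
  moreover have "(\<lambda>n. sqrt (l2_inner (r n) (r n))) \<longlonglongrightarrow> 0"
  proof (rule LIMSEQ_I)
    fix \<epsilon> :: real assume "\<epsilon> > 0"
    then obtain N where N: "\<forall>n\<ge>N. sqrt (l2_inner (r n) (r n)) \<le> \<epsilon> / 2"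
      using uniform[of "\<epsilon> / 2"] by auto
    have "norm (sqrt (l2_inner (r n) (r n)) - 0) < \<epsilon>" if "n \<ge> N" for n
      using N that \<open>\<epsilon> > 0\<close> by (auto simp: l2_inner_self_nonneg)
    then show "\<exists>N. \<forall>n\<ge>N. norm (sqrt (l2_inner (r n) (r n)) - 0) < \<epsilon>" by blast
  qed
  ultimately show ?thesis by (auto simp: r_def)
qed

lemma hilbert_space_on_l2:
  "hilbert_space_on l2 (\<lambda>x y i. x i + y i) (\<lambda>a x i. a * x i) (\<lambda>i. 0) l2_inner"
  unfolding hilbert_space_on_def banach_space_on_def
proof (intro conjI)
  show "real_vector_space_on l2 (\<lambda>x y i. x i + y i) (\<lambda>a x i. a * x i) (\<lambda>i. 0)"
    by (rule real_vector_space_on_pointwise) (auto intro: l2_zero l2_add l2_scale)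
  show "\<forall>s. (\<forall>n. s n \<in> l2) \<and> (\<forall>e>0. \<exists>N. \<forall>m\<ge>N. \<forall>n\<ge>N.
        sqrt (l2_inner (\<lambda>i. s m i + - 1 * s n i) (\<lambda>i. s m i + - 1 * s n i)) < e) \<longrightarrow>
     (\<exists>l\<in>l2. (\<lambda>n. sqrt (l2_inner (\<lambda>i. s n i + - 1 * l i) (\<lambda>i. s n i + - 1 * l i))) \<longlonglongrightarrow> 0)"
    using l2_complete by blast
  show "\<forall>x\<in>l2. sqrt (l2_inner x x) = 0 \<longleftrightarrow> x = (\<lambda>i. 0)"
    using l2_norm_eq_0_iff by blast
  show "\<forall>x\<in>l2. \<forall>y\<in>l2. l2_inner x y = l2_inner y x"
    by (simp add: l2_inner_commute)
  show "\<forall>x\<in>l2. \<forall>y\<in>l2. \<forall>z\<in>l2. l2_inner (\<lambda>i. x i + y i) z = l2_inner x z + l2_inner y z"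
    by (simp add: l2_inner_add_left)
  show "\<forall>a. \<forall>x\<in>l2. \<forall>y\<in>l2. l2_inner (\<lambda>i. a * x i) y = a * l2_inner x y"
    by (simp add: l2_inner_scale_left)
  show "\<forall>x\<in>l2. 0 \<le> l2_inner x x" "\<forall>x\<in>l2. 0 \<le> sqrt (l2_inner x x)"
    by (simp_all add: l2_inner_self_nonneg)
  show "\<forall>a. \<forall>x\<in>l2. sqrt (l2_inner (\<lambda>i. a * x i) (\<lambda>i. a * x i)) = \<bar>a\<bar> * sqrt (l2_inner x x)"
    by (simp add: l2_norm_scale)
  show "\<forall>x\<in>l2. \<forall>y\<in>l2. sqrt (l2_inner (\<lambda>i. x i + y i) (\<lambda>i. x i + y i))
      \<le> sqrt (l2_inner x x) + sqrt (l2_inner y y)"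
    by (simp add: l2_norm_triangle)
qed

lemma l2_inner_finite_support:
  assumes "finite G" "\<And>j. j \<notin> G \<Longrightarrow> y j = 0"
  shows "l2_inner y y = (\<Sum>i\<in>G. (y i)\<^sup>2)"
proof -
  have "l2_inner y y = (\<Sum>\<^sub>\<infinity>i\<in>G. y i * y i)"
    unfolding l2_inner_def by (rule infsum_cong_neutral) (use assms in auto)
  also have "\<dots> = (\<Sum>i\<in>G. (y i)\<^sup>2)" using assms(1) by (simp add: power2_eq_square)
  finally show ?thesis .
qed

lemma l2_inner_self_split:
  assumes "x \<in> l2" and "finite G"
  shows "l2_inner x x =
    (\<Sum>i\<in>G. (x i)\<^sup>2) + l2_inner (\<lambda>j. if j \<in> G then 0 else x j) (\<lambda>j. if j \<in> G then 0 else x j)"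
proof -
  let ?x1 = "\<lambda>j. if j \<in> G then x j else 0" and ?x2 = "\<lambda>j. if j \<in> G then 0 else x j"
  have "?x1 \<in> l2" "?x2 \<in> l2" by (auto intro: l2_abs_le[OF assms(1)])
  have "l2_inner x x = (\<Sum>\<^sub>\<infinity>i. ?x1 i * ?x1 i + ?x2 i * ?x2 i)"
    unfolding l2_inner_def by (rule infsum_cong) auto
  also have "\<dots> = l2_inner ?x1 ?x1 + l2_inner ?x2 ?x2"
    unfolding l2_inner_def by (intro infsum_add l2_mult_summable \<open>?x1 \<in> l2\<close> \<open>?x2 \<in> l2\<close>)
  also have "l2_inner ?x1 ?x1 = (\<Sum>i\<in>G. (x i)\<^sup>2)"
    by (subst l2_inner_finite_support[OF assms(2)]) auto
  finally show ?thesis .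
qed

lemma l2_small_tail:
  assumes "x \<in> l2" and "\<eta> > 0"
  obtains G where "finite G"
    and "l2_inner (\<lambda>j. if j \<in> G then 0 else x j) (\<lambda>j. if j \<in> G then 0 else x j) < \<eta>"
proof -
  have "(\<lambda>i. (x i)\<^sup>2) summable_on UNIV" using assms(1) by (simp add: l2_def)
  then have sup: "l2_inner x x = (SUP F\<in>{F. finite F \<and> F \<subseteq> UNIV}. (\<Sum>i\<in>F. (x i)\<^sup>2))"
    unfolding l2_inner_def power2_eq_square[symmetric] by (rule infsum_nonneg_is_SUPREMUM_real) simp
  have bdd: "bdd_above ((\<lambda>F. \<Sum>i\<in>F. (x i)\<^sup>2) ` {F. finite F \<and> F \<subseteq> UNIV})"
    using sum_squares_le_l2_inner[OF assms(1)] by (intro bdd_aboveI2) auto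
  have "l2_inner x x - \<eta> < l2_inner x x" using \<open>\<eta> > 0\<close> by simp
  then obtain G where "finite G" and "l2_inner x x - \<eta> < (\<Sum>i\<in>G. (x i)\<^sup>2)"
    unfolding sup by (subst (asm) less_cSUP_iff[OF _ bdd]) auto
  then show thesis
    using that l2_inner_self_split[OF assms(1) \<open>finite G\<close>] by auto
qed

lemma pointwise_linear_functional_l2:
  assumes "bounded_linear_functional_on l2 (\<lambda>x y i. x i + y i) (\<lambda>a x i. a * x i)
      (\<lambda>x. sqrt (l2_inner x x)) \<phi>"
  shows "pointwise_linear_functional l2 \<phi>"
proof
  show "\<And>G x. x \<in> l2 \<Longrightarrow> (\<lambda>j. if j \<in> G then 0 else x j) \<in> l2"
    by (rule l2_abs_le) auto
qed (use assms in \<open>auto simp: bounded_linear_functional_on_def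
    intro: l2_finite_support l2_add l2_scale\<close>)

context
  fixes \<phi> :: "('i \<Rightarrow> real) \<Rightarrow> real" and k :: real
  assumes linear: "pointwise_linear_functional l2 \<phi>"
    and bound: "\<And>x. x \<in> l2 \<Longrightarrow> \<bar>\<phi> x\<bar> \<le> k * sqrt (l2_inner x x)" and "k \<ge> 0"
begin

interpretation pointwise_linear_functional l2 \<phi> by (fact linear)

text \<open>Test \<open>\<phi>\<close> on the finitely supported vector of its own coefficients.\<close>
lemma l2_unit_coeff_sum_squares_le:
  assumes "finite G"
  shows "(\<Sum>i\<in>G. (unit_coeff \<phi> i)\<^sup>2) \<le> k\<^sup>2"
proof -
  define S where "S = (\<Sum>i\<in>G. (unit_coeff \<phi> i)\<^sup>2)"
  define y where "y = (\<lambda>j. if j \<in> G then unit_coeff \<phi> j else 0)"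
  have "y \<in> l2" unfolding y_def by (rule l2_finite_support[OF assms]) auto
  have "l2_inner y y = S" unfolding S_def by (subst l2_inner_finite_support[OF assms]) (auto simp: y_def)
  moreover have "\<phi> y = S"
    unfolding y_def S_def finite_support[OF assms] by (simp add: power2_eq_square)
  ultimately have "S \<le> k * sqrt S" using bound[OF \<open>y \<in> l2\<close>] by simp
  moreover have "S \<ge> 0" unfolding S_def by (intro sum_nonneg) auto
  ultimately have "sqrt S \<le> k"
  proof (cases "S = 0")
    case False
    assume "S \<le> k * sqrt S" "S \<ge> 0"
    then have "sqrt S * sqrt S \<le> k * sqrt S" and "sqrt S > 0" using False by simp_all
    then show ?thesis by (rule mult_right_le_imp_le)
  qed (use \<open>k \<ge> 0\<close> in simp)
  then show ?thesis unfolding S_def by (rule sqrt_le_D)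
qed

text \<open>Split x into a finitely supported part, bounded by Cauchy-Schwarz against the coefficients
  off \<open>G0\<close>, and a remainder of small norm.\<close>
lemma l2_functional_bound_off:
  assumes "x \<in> l2" and "\<And>j. j \<in> G0 \<Longrightarrow> x j = 0" and "l2_inner x x \<le> Q"
    and small: "\<And>G. finite G \<Longrightarrow> G \<inter> G0 = {} \<Longrightarrow> (\<Sum>i\<in>G. (unit_coeff \<phi> i)\<^sup>2) \<le> \<epsilon>"
  shows "\<bar>\<phi> x\<bar> \<le> sqrt Q * sqrt \<epsilon>"
proof (rule field_le_epsilon)
  fix \<eta> :: real assume "\<eta> > 0"
  define r where "r = \<eta> / (k + 1)"
  have "r > 0" and "k * r \<le> \<eta>"
    using \<open>\<eta> > 0\<close> \<open>k \<ge> 0\<close> by (auto simp: r_def field_simps)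
  obtain G1 where "finite G1"
    and tail: "l2_inner (\<lambda>j. if j \<in> G1 then 0 else x j) (\<lambda>j. if j \<in> G1 then 0 else x j) < r\<^sup>2"
    using l2_small_tail[OF \<open>x \<in> l2\<close>, of "r\<^sup>2"] \<open>r > 0\<close> by auto
  define G where "G = G1 - G0"
  have "finite G" "G \<inter> G0 = {}" using \<open>finite G1\<close> by (auto simp: G_def)
  have same_tail: "(\<lambda>j. if j \<in> G then 0 else x j) = (\<lambda>j. if j \<in> G1 then 0 else x j)"
    using assms(2) by (auto simp: G_def)
  have "\<bar>\<Sum>i\<in>G. x i * unit_coeff \<phi> i\<bar> \<le> L2_set x G * L2_set (unit_coeff \<phi>) G"
    by (rule order_trans[OF sum_abs]) (simp add: abs_mult L2_set_mult_ineq)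
  also have "\<dots> \<le> sqrt Q * sqrt \<epsilon>"
    unfolding L2_set_def
    using sum_squares_le_l2_inner[OF \<open>x \<in> l2\<close> \<open>finite G\<close>] assms(3)
      small[OF \<open>finite G\<close> \<open>G \<inter> G0 = {}\<close>] l2_inner_self_nonneg[of x]
    by (intro mult_mono real_sqrt_le_mono) (auto intro: sum_nonneg)
  finally have large: "\<bar>\<Sum>i\<in>G. x i * unit_coeff \<phi> i\<bar> \<le> sqrt Q * sqrt \<epsilon>" .
  have "sqrt (l2_inner (\<lambda>j. if j \<in> G then 0 else x j) (\<lambda>j. if j \<in> G then 0 else x j)) \<le> r"
    using tail \<open>r > 0\<close> same_tail real_sqrt_less_iff[of _ "r\<^sup>2"] by (simp add: less_imp_le)
  then have "\<bar>\<phi> (\<lambda>j. if j \<in> G then 0 else x j)\<bar> \<le> \<eta>"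
    using bound[OF vanish_on_mem[OF \<open>x \<in> l2\<close>]] \<open>k \<ge> 0\<close> \<open>k * r \<le> \<eta>\<close>
    by (meson mult_left_mono order_trans)
  then show "\<bar>\<phi> x\<bar> \<le> sqrt Q * sqrt \<epsilon> + \<eta>"
    using split_off_finite[OF \<open>x \<in> l2\<close> \<open>finite G\<close>] large by linarith
qed

end

lemma l2_inner_diff_le:
  assumes "g \<in> l2" "f \<in> l2" "l2_inner g g \<le> R" "l2_inner f f \<le> R"
  shows "l2_inner (\<lambda>i. g i + - 1 * f i) (\<lambda>i. g i + - 1 * f i) \<le> 4 * R"
proof -
  have "sqrt (l2_inner g g) \<le> sqrt R" "sqrt (l2_inner f f) \<le> sqrt R"
    using assms(3,4) by simp_all
  moreover have "sqrt (l2_inner (\<lambda>i. g i + - 1 * f i) (\<lambda>i. g i + - 1 * f i)) \<le>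
      sqrt (l2_inner g g) + sqrt (l2_inner f f)"
    using l2_norm_triangle[OF assms(1) l2_scale[OF assms(2), of "-1"]] l2_norm_scale[OF assms(2), of "-1"]
    by simp
  ultimately have "sqrt (l2_inner (\<lambda>i. g i + - 1 * f i) (\<lambda>i. g i + - 1 * f i)) \<le> 2 * sqrt R"
    by linarith
  then have "l2_inner (\<lambda>i. g i + - 1 * f i) (\<lambda>i. g i + - 1 * f i) \<le> (2 * sqrt R)\<^sup>2"
    by (rule sqrt_le_D)
  then show ?thesis using l2_inner_self_nonneg[of g] assms(3) by (simp add: power_mult_distrib)
qed

lemma l2_functional_continuous_on_bounded:
  assumes "bounded_linear_functional_on l2 (\<lambda>x y i. x i + y i) (\<lambda>a x i. a * x i)
      (\<lambda>x. sqrt (l2_inner x x)) \<phi>"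
    and "C \<subseteq> l2" and R: "\<And>x. x \<in> C \<Longrightarrow> l2_inner x x \<le> R"
  shows "continuous_on C \<phi>"
proof -
  interpret pointwise_linear_functional l2 \<phi>
    using assms(1) by (rule pointwise_linear_functional_l2)
  obtain k where "k \<ge> 0" and bound: "\<And>x. x \<in> l2 \<Longrightarrow> \<bar>\<phi> x\<bar> \<le> k * sqrt (l2_inner x x)"
    by (rule bounded_linear_functional_on_nonneg_bound[OF assms(1)]) (simp_all add: l2_inner_self_nonneg)
  note coeff_bounds = l2_unit_coeff_sum_squares_le[OF pointwise_linear_functional_axioms bound \<open>k \<ge> 0\<close>]
    and off_bound = l2_functional_bound_off[OF pointwise_linear_functional_axioms bound \<open>k \<ge> 0\<close>]
  define R' where "R' = max R 0"
  have "R' \<ge> 0" by (simp add: R'_def)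
  have diff_bound: "l2_inner (\<lambda>i. g i + - 1 * f i) (\<lambda>i. g i + - 1 * f i) \<le> 4 * R'"
    if "g \<in> C" "f \<in> C" for g f
    using that \<open>C \<subseteq> l2\<close> R[OF that(1)] R[OF that(2)]
    by (intro l2_inner_diff_le) (auto simp: R'_def)
  show ?thesis
  proof (rule continuous_on_if_small_tails[OF \<open>C \<subseteq> l2\<close>])
    fix \<epsilon> :: real assume "\<epsilon> > 0"
    define \<epsilon>' where "\<epsilon>' = \<epsilon>\<^sup>2 / (4 * R' + 1)"
    have "\<epsilon>' > 0" using \<open>\<epsilon> > 0\<close> \<open>R' \<ge> 0\<close> by (simp add: \<epsilon>'_def)
    then obtain G0 where "finite G0"
      and small: "\<And>G. finite G \<Longrightarrow> G \<inter> G0 = {} \<Longrightarrow> (\<Sum>i\<in>G. (unit_coeff \<phi> i)\<^sup>2) \<le> \<epsilon>'"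
      using bounded_finite_sums_imp_small_tails[OF coeff_bounds] by metis
    have "sqrt (4 * R') * sqrt \<epsilon>' = sqrt (\<epsilon>\<^sup>2 * (4 * R' / (4 * R' + 1)))"
      by (simp add: \<epsilon>'_def real_sqrt_mult[symmetric])
    also have "\<dots> \<le> sqrt (\<epsilon>\<^sup>2)"
      using \<open>R' \<ge> 0\<close> by (intro real_sqrt_le_mono mult_left_le) auto
    finally have "sqrt (4 * R') * sqrt \<epsilon>' \<le> \<epsilon>" using \<open>\<epsilon> > 0\<close> by simp
    moreover have "\<bar>\<phi> (\<lambda>j. if j \<in> G0 then 0 else g j + - 1 * f j)\<bar> \<le> sqrt (4 * R') * sqrt \<epsilon>'"
      if "g \<in> C" "f \<in> C" for g f
    proof (rule off_bound)
      have "(\<lambda>i. g i + - 1 * f i) \<in> l2" using that \<open>C \<subseteq> l2\<close> by (intro diff_mem) auto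
      then show "(\<lambda>j. if j \<in> G0 then 0 else g j + - 1 * f j) \<in> l2"
        by (rule vanish_on_mem)
      show "l2_inner (\<lambda>j. if j \<in> G0 then 0 else g j + - 1 * f j)
          (\<lambda>j. if j \<in> G0 then 0 else g j + - 1 * f j) \<le> 4 * R'"
        using l2_inner_self_split[OF \<open>(\<lambda>i. g i + - 1 * f i) \<in> l2\<close> \<open>finite G0\<close>]
          diff_bound[OF that] sum_nonneg[of G0 "\<lambda>i. (g i + - 1 * f i)\<^sup>2"] by simp
    qed (use small in auto)
    ultimately show "\<exists>G. finite G \<and>
        (\<forall>g\<in>C. \<forall>f\<in>C. \<bar>\<phi> (\<lambda>j. if j \<in> G then 0 else g j + - 1 * f j)\<bar> \<le> \<epsilon>)"
      using \<open>finite G0\<close> by (blast intro: order_trans)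
  qed
qed

lemma uniform_eberlein_compact_if_bounded_compact_in_l2:
  fixes C :: "('i \<Rightarrow> real) set"
  assumes "compact C" and "C \<subseteq> l2" and "\<And>x. x \<in> C \<Longrightarrow> l2_inner x x \<le> R"
  shows "uniform_eberlein_compact TYPE('i \<Rightarrow> real) (top_of_set C)"
  unfolding uniform_eberlein_compact_def
proof (intro conjI exI)
  show "compact_space (top_of_set C)"
    using assms(1) by (simp add: compact_space_subtopology)
  show "Hausdorff_space (top_of_set C)"
    using Hausdorff_space_fun_euclidean by (rule Hausdorff_space_subtopology)
  show "hilbert_space_on l2 (\<lambda>x y i. x i + y i) (\<lambda>a x i. a * x i) (\<lambda>i. 0) l2_inner"
    by (rule hilbert_space_on_l2)
  have "continuous_on C \<phi>"
    if "bounded_linear_functional_on l2 (\<lambda>x y i. x i + y i) (\<lambda>a x i. a * x i)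
      (\<lambda>x. sqrt (l2_inner x x)) \<phi>" for \<phi>
    using that assms(2,3) by (rule l2_functional_continuous_on_bounded)
  note weak = weak_topology_on_agrees_on_compact[where nrm = "\<lambda>x. sqrt (l2_inner x x)",
      OF assms(2,1) abs_le_l2_norm this]
  show "compactin (weak_topology_on l2 (\<lambda>x y i. x i + y i) (\<lambda>a x i. a * x i)
      (\<lambda>x. sqrt (l2_inner x x))) C"
    by (rule weak(1))
  show "homeomorphic_map (top_of_set C) (subtopology (weak_topology_on l2 (\<lambda>x y i. x i + y i)
      (\<lambda>a x i. a * x i) (\<lambda>x. sqrt (l2_inner x x))) C) id"
    by (rule weak(2))
qed (rule assms(2))

section \<open>Embedding by weighted indicators\<close>

locale weighted_clopen_subbase =
  fixes X :: "'a topology" and P :: "'a set set" and w :: "'a set \<Rightarrow> real"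
  assumes t0: "t0_space X" and clopen: "clopen_family X P"
    and subbase: "subbase_of (P \<union> {topspace X - U | U. U \<in> P}) X"
    and weight_pos: "\<And>U. U \<in> P \<Longrightarrow> w U > 0"
begin

definition embed :: "'a \<Rightarrow> 'a set \<Rightarrow> real" where
  "embed x = (\<lambda>U. if U \<in> P \<and> x \<in> U then w U else 0)"

definition K :: "('a set \<Rightarrow> real) set" where
  "K = closure (embed ` topspace X)"

lemma openin_P: "U \<in> P \<Longrightarrow> openin X U"
  and closedin_P: "U \<in> P \<Longrightarrow> closedin X U"
  and P_subset: "U \<in> P \<Longrightarrow> U \<subseteq> topspace X"
  using clopen by (auto simp: clopen_family_def dest: openin_subset)

lemma subbasic_neighbourhood:
  assumes "openin X W" "x \<in> W"
  obtains F where "finite F" "F \<subseteq> P \<union> {topspace X - U | U. U \<in> P}"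
    "\<And>S. S \<in> F \<Longrightarrow> x \<in> S" "topspace X \<inter> \<Inter>F \<subseteq> W"
proof -
  let ?S = "P \<union> {topspace X - U | U. U \<in> P}"
  have "openin X = arbitrary union_of (finite intersection_of (\<lambda>U. U \<in> ?S) relative_to topspace X)"
    using subbase unfolding subbase_of_def by blast
  then have "(arbitrary union_of (finite intersection_of (\<lambda>U. U \<in> ?S) relative_to topspace X)) W"
    using assms(1) by simp
  then obtain \<U> where \<U>: "\<U> \<subseteq> Collect (finite intersection_of (\<lambda>U. U \<in> ?S) relative_to topspace X)"
    and "\<Union>\<U> = W"
    unfolding union_of_def by blast
  then obtain B where "B \<in> \<U>" "x \<in> B" using assms(2) by blast
  then have "(finite intersection_of (\<lambda>U. U \<in> ?S) relative_to topspace X) B" using \<U> by blast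
  then obtain S where "(finite intersection_of (\<lambda>U. U \<in> ?S)) S" "topspace X \<inter> S = B"
    unfolding relative_to_def by blast
  then obtain F where F: "finite F" "F \<subseteq> ?S" "topspace X \<inter> \<Inter>F = B"
    unfolding intersection_of_def by auto
  show thesis
  proof (rule that[OF F(1,2)])
    show "x \<in> S" if "S \<in> F" for S using that F(3) \<open>x \<in> B\<close> by blast
    show "topspace X \<inter> \<Inter>F \<subseteq> W" using F(3) \<open>B \<in> \<U>\<close> \<open>\<Union>\<U> = W\<close> by blast
  qed
qed

lemma P_separates_open:
  assumes "openin X W" "x \<in> W" "y \<in> topspace X" "y \<notin> W"
  shows "\<exists>U\<in>P. x \<in> U \<longleftrightarrow> y \<notin> U"
proof -
  obtain F where F: "finite F" "F \<subseteq> P \<union> {topspace X - U | U. U \<in> P}" "\<And>S. S \<in> F \<Longrightarrow> x \<in> S"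
    "topspace X \<inter> \<Inter>F \<subseteq> W"
    by (rule subbasic_neighbourhood[OF assms(1,2)]) blast
  then obtain S where "S \<in> F" "y \<notin> S" using assms(3,4) by blast
  then have "x \<in> S" using F(3) by blast
  from \<open>S \<in> F\<close> F(2) consider "S \<in> P" | U where "U \<in> P" "S = topspace X - U" by blast
  then show ?thesis
  proof cases
    case 1
    then show ?thesis using \<open>x \<in> S\<close> \<open>y \<notin> S\<close> by blast
  next
    case 2
    then show ?thesis using \<open>x \<in> S\<close> \<open>y \<notin> S\<close> assms(3) by blast
  qed
qed

lemma P_separates_points:
  assumes "x \<in> topspace X" "y \<in> topspace X" "x \<noteq> y"
  shows "\<exists>U\<in>P. x \<in> U \<longleftrightarrow> y \<notin> U"
proof -
  obtain W where W: "openin X W" "x \<in> W \<longleftrightarrow> y \<notin> W"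
    using t0 assms unfolding t0_space_def by blast
  then show ?thesis
    using P_separates_open[OF W(1) _ assms(2)] P_separates_open[OF W(1) _ assms(1)] by blast
qed

lemma inj_on_embed: "inj_on embed (topspace X)"
proof (rule inj_onI, rule ccontr)
  fix x y assume "x \<in> topspace X" "y \<in> topspace X" "embed x = embed y" "x \<noteq> y"
  then obtain U where "U \<in> P" "x \<in> U \<longleftrightarrow> y \<notin> U" using P_separates_points by blast
  moreover have "embed x U = embed y U" using \<open>embed x = embed y\<close> by simp
  ultimately show False using weight_pos[of U] by (auto simp: embed_def split: if_splits)
qed

lemma continuous_map_embed: "continuous_map X euclidean embed"
proof -
  have "continuous_map X euclidean (\<lambda>x. embed x U)" for U
  proof (cases "U \<in> P")
    case True
    have "{x \<in> topspace X. embed x U \<in> Z} =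
        (if w U \<in> Z then U else {}) \<union> (if 0 \<in> Z then topspace X - U else {})" for Z
      using True P_subset[OF True] by (auto simp: embed_def)
    then show ?thesis
      using openin_P[OF True] openin_diff[OF _ closedin_P[OF True]]
      by (auto simp: continuous_map_def)
  qed (simp add: embed_def)
  then show ?thesis
    unfolding euclidean_product_topology[symmetric] continuous_map_componentwise_UNIV by blast
qed

text \<open>A subbasic set S is the preimage of an open condition on the coordinate of S (if S \<in> P)
  or of its complement (otherwise); this uses that the weights are nonzero.\<close>
lemma open_map_embed: "open_map X (top_of_set (embed ` topspace X)) embed"
  unfolding open_map_def
proof (intro allI impI)
  fix W assume W: "openin X W"
  show "openin (top_of_set (embed ` topspace X)) (embed ` W)"
  proof (subst openin_subopen, intro ballI)
    fix y assume "y \<in> embed ` W"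
    then obtain x where x: "x \<in> W" "y = embed x" by blast
    obtain F where F: "finite F" "F \<subseteq> P \<union> {topspace X - U | U. U \<in> P}"
      "\<And>S. S \<in> F \<Longrightarrow> x \<in> S" "topspace X \<inter> \<Inter>F \<subseteq> W"
      by (rule subbasic_neighbourhood[OF W x(1)]) blast
    define c where "c S = (if S \<in> P then S else topspace X - S)" for S
    define V where "V S = (if S \<in> P then - {0::real} else ball 0 (w (topspace X - S)))" for S
    define Z where "Z = {g :: 'a set \<Rightarrow> real. \<forall>S\<in>F. g (c S) \<in> V S}"
    have "open Z" unfolding Z_def by (rule product_topology_basis') (auto simp: F(1) V_def)
    have code: "embed z \<in> Z \<longleftrightarrow> (\<forall>S\<in>F. z \<in> S)" if "z \<in> topspace X" for z
    proof -
      have "embed z (c S) \<in> V S \<longleftrightarrow> z \<in> S" if "S \<in> F" for S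
      proof (cases "S \<in> P")
        case False
        then obtain U where "U \<in> P" "S = topspace X - U" using F(2) \<open>S \<in> F\<close> by blast
        moreover have "topspace X - (topspace X - U) = U" using P_subset[OF \<open>U \<in> P\<close>] by blast
        ultimately show ?thesis
          using False weight_pos[OF \<open>U \<in> P\<close>] \<open>z \<in> topspace X\<close> by (auto simp: c_def V_def embed_def)
      qed (use weight_pos[of S] in \<open>auto simp: c_def V_def embed_def\<close>)
      then show ?thesis unfolding Z_def by blast
    qed
    show "\<exists>T. openin (top_of_set (embed ` topspace X)) T \<and> y \<in> T \<and> T \<subseteq> embed ` W"
    proof (intro exI conjI)
      show "openin (top_of_set (embed ` topspace X)) (embed ` topspace X \<inter> Z)"
        using \<open>open Z\<close> by (rule openin_open_Int)
      show "y \<in> embed ` topspace X \<inter> Z"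
        using x F(3) code openin_subset[OF W] by auto
      show "embed ` topspace X \<inter> Z \<subseteq> embed ` W"
        using code F(4) by blast
    qed
  qed
qed

lemma embedding_map_embed: "embedding_map X (top_of_set K) embed"
proof -
  have "subtopology (top_of_set K) (embed ` topspace X) = top_of_set (embed ` topspace X)"
    unfolding K_def by (simp add: subtopology_subtopology Int_absorb1 closure_subset)
  then show ?thesis
    unfolding embedding_map_def
    using continuous_map_embed inj_on_embed open_map_embed
    by (auto intro!: bijective_open_imp_homeomorphic_map simp: continuous_map_in_subtopology)
qed

lemma K_subset_box: "K \<subseteq> {f. \<forall>U. f U = 0 \<or> (U \<in> P \<and> f U = w U)}"
proof -
  have "{f :: 'a set \<Rightarrow> real. \<forall>U. f U = 0 \<or> (U \<in> P \<and> f U = w U)} =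
      {f. \<forall>U. f U = 0 \<or> f U = (if U \<in> P then w U else 0)}"
    by auto
  moreover have "closed {f :: 'a set \<Rightarrow> real. \<forall>U. f U = 0 \<or> f U = (if U \<in> P then w U else 0)}"
    by (intro closed_Collect_all closed_Collect_disj closed_Collect_eq continuous_on_const
        continuous_on_product_coordinates)
  ultimately show ?thesis
    unfolding K_def by (intro closure_minimal) (auto simp: embed_def)
qed

lemma K_nonzero: "f \<in> K \<Longrightarrow> f U \<noteq> 0 \<Longrightarrow> U \<in> P \<and> f U = w U"
  using K_subset_box by blast

lemma K_bounds: "f \<in> K \<Longrightarrow> 0 \<le> f U \<and> f U \<le> (if U \<in> P then w U else 0)"
  using K_subset_box weight_pos[of U] by (cases "f U = 0") (auto dest!: subsetD)

lemma compact_K: "compact K"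
proof -
  have "compactin (product_topology (\<lambda>_. euclidean) UNIV)
      (Pi\<^sub>E UNIV (\<lambda>U. {0::real, if U \<in> P then w U else 0}))"
    by (subst compactin_PiE) (auto simp: compactin_euclidean_iff)
  then have "compact {f :: 'a set \<Rightarrow> real. \<forall>U. f U = 0 \<or> (U \<in> P \<and> f U = w U)}"
    unfolding euclidean_product_topology compactin_euclidean_iff
    by (rule back_subst) (auto simp: PiE_def extensional_def Pi_def)
  then have "compact ({f. \<forall>U. f U = 0 \<or> (U \<in> P \<and> f U = w U)} \<inter> K)"
    unfolding K_def by (rule compact_Int_closed[OF _ closed_closure])
  then show ?thesis using K_subset_box by (simp add: Int_absorb1)
qed

text \<open>The functions that are nonzero on all of F form an open set containing f, so it contains
  the image of a point of X, and that point lies in every member of F.\<close>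
lemma K_support_meets:
  assumes "f \<in> K" "finite F" "\<And>U. U \<in> F \<Longrightarrow> f U \<noteq> 0"
  shows "\<Inter>F \<noteq> {}"
proof -
  define Z where "Z = {g :: 'a set \<Rightarrow> real. \<forall>U\<in>F. g ((\<lambda>U. U) U) \<in> - {0}}"
  have "open Z" unfolding Z_def by (rule product_topology_basis') (auto simp: assms(2))
  moreover have "f \<in> Z" using assms(3) by (auto simp: Z_def)
  ultimately have "embed ` topspace X \<inter> Z \<noteq> {}"
    using assms(1) unfolding K_def closure_iff_nhds_not_empty by blast
  then obtain x where "x \<in> topspace X" "embed x \<in> Z" by blast
  then have "x \<in> \<Inter>F" by (auto simp: Z_def embed_def split: if_splits)
  then show ?thesis by blast
qed

lemma K_dim_le_0: "top_of_set K dim_le 0"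
  unfolding dimension_le_0_neighbourhood_base_of_clopen neighbourhood_base_of
proof (intro allI impI)
  fix W f assume "openin (top_of_set K) W \<and> f \<in> W"
  then obtain Z where "open Z" "W = K \<inter> Z" "f \<in> K" "f \<in> Z" by (auto simp: openin_open)
  then obtain B where B: "finite {U. B U \<noteq> UNIV}" "\<And>U. open (B U)" "f \<in> Pi\<^sub>E UNIV B"
    "Pi\<^sub>E UNIV B \<subseteq> Z"
    unfolding open_fun_def openin_product_topology_alt by auto
  define J where "J = {U. B U \<noteq> UNIV}"
  define V where "V = K \<inter> (\<Inter>U\<in>J. {g. g U = f U})"
  text \<open>Points of K take only the two values 0 and w U at U, so fixing finitely many
    coordinates is an open as well as a closed condition on K.\<close>
  define r where "r U = (if U \<in> P then w U else 1)" for U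
  have "g U = f U \<longleftrightarrow> g U \<in> ball (f U) (r U)" if "g \<in> K" for g U
  proof -
    have "g U = 0 \<or> (U \<in> P \<and> g U = w U)" "f U = 0 \<or> (U \<in> P \<and> f U = w U)"
      using K_subset_box that \<open>f \<in> K\<close> by blast+
    then show ?thesis using weight_pos[of U] by (cases "U \<in> P") (auto simp: r_def dist_real_def)
  qed
  then have "V = K \<inter> {g. \<forall>U\<in>J. g ((\<lambda>U. U) U) \<in> ball (f U) (r U)}"
    unfolding V_def by auto
  moreover have "open {g :: 'a set \<Rightarrow> real. \<forall>U\<in>J. g ((\<lambda>U. U) U) \<in> ball (f U) (r U)}"
    using B(1) by (intro product_topology_basis') (auto simp: J_def)
  ultimately have "openin (top_of_set K) V" by (simp add: openin_open_Int)
  moreover have "closedin (top_of_set K) V"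
    unfolding V_def by (intro closedin_closed_Int closed_INT ballI closed_Collect_eq
        continuous_on_const continuous_on_product_coordinates)
  moreover have "V \<subseteq> W"
  proof
    fix g assume "g \<in> V"
    then have "g \<in> Pi\<^sub>E UNIV B" using B(3) by (force simp: V_def J_def PiE_def Pi_def)
    then show "g \<in> W" using B(4) \<open>g \<in> V\<close> \<open>W = K \<inter> Z\<close> by (auto simp: V_def)
  qed
  ultimately show "\<exists>U V. openin (top_of_set K) U \<and> (closedin (top_of_set K) V \<and>
      openin (top_of_set K) V) \<and> f \<in> U \<and> U \<subseteq> V \<and> V \<subseteq> W"
    using \<open>f \<in> K\<close> by (intro exI[of _ V]) (auto simp: V_def)
qed

end

context weighted_clopen_subbase
begin

lemma finite_support_if_strongly_point_finite:
  assumes "strongly_point_finite Q" and "f \<in> K"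
  shows "finite {U \<in> Q. f U \<noteq> 0}"
proof (rule ccontr)
  assume "infinite {U \<in> Q. f U \<noteq> 0}"
  then have "\<exists>C\<subseteq>{U \<in> Q. f U \<noteq> 0}. countable C \<and> infinite C" by (rule infinite_countable_subset')
  then obtain Q' where Q': "Q' \<subseteq> {U \<in> Q. f U \<noteq> 0}" "countable Q'" "infinite Q'" by blast
  have "Q' \<subseteq> Q" using Q'(1) by blast
  then have "\<exists>F. F \<subseteq> Q' \<and> finite F \<and> F \<noteq> {} \<and> \<Inter>F = {}"
    using assms(1) Q'(2,3) unfolding strongly_point_finite_def by blast
  then obtain F where F: "F \<subseteq> Q'" "finite F" "\<Inter>F = {}" by blast
  have "\<Inter>F \<noteq> {}"
    by (rule K_support_meets[OF assms(2) F(2)]) (use F(1) Q'(1) in blast)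
  then show False using F(3) by blast
qed

lemma card_support_le_if_bounded:
  assumes "\<forall>F. F \<subseteq> Q \<and> finite F \<and> card F = b + 2 \<longrightarrow> \<Inter>F = {}" and "f \<in> K"
  shows "finite {U \<in> Q. f U \<noteq> 0}" and "card {U \<in> Q. f U \<noteq> 0} \<le> b + 1"
proof -
  let ?S = "{U \<in> Q. f U \<noteq> 0}"
  have no_large: False if "finite F" "card F = b + 2" "F \<subseteq> ?S" for F
  proof -
    have "\<Inter>F \<noteq> {}"
      by (rule K_support_meets[OF assms(2) that(1)]) (use that(3) in blast)
    moreover have "\<Inter>F = {}" using assms(1) that by blast
    ultimately show False by blast
  qed
  show "finite ?S"
  proof (rule ccontr)
    assume "infinite ?S"
    then obtain F where "finite F" "card F = b + 2" "F \<subseteq> ?S"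
      using infinite_arbitrarily_large by blast
    then show False by (rule no_large)
  qed
  show "card ?S \<le> b + 1"
  proof (rule ccontr)
    assume "\<not> card ?S \<le> b + 1"
    then have "b + 2 \<le> card ?S" by simp
    then obtain F where "F \<subseteq> ?S" "card F = b + 2" "finite F"
      by (rule obtain_subset_with_card_n)
    then show False using no_large by blast
  qed
qed

lemma K_subset_c0:
  assumes "\<And>n. strongly_point_finite (Ps n)" and level: "\<And>U. U \<in> P \<Longrightarrow> U \<in> Ps (level U)"
    and weight: "\<And>U. U \<in> P \<Longrightarrow> w U \<le> 1 / (real (level U) + 1)"
  shows "K \<subseteq> c0"
proof
  fix f assume "f \<in> K"
  show "f \<in> c0"
    unfolding c0_def
  proof (intro CollectI allI impI)
    fix \<epsilon> :: real assume "\<epsilon> > 0"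
    define N where "N = nat \<lceil>1 / \<epsilon>\<rceil>"
    have "{U. \<epsilon> \<le> \<bar>f U\<bar>} \<subseteq> (\<Union>n\<le>N. {U \<in> Ps n. f U \<noteq> 0})"
    proof
      fix U assume "U \<in> {U. \<epsilon> \<le> \<bar>f U\<bar>}"
      then have "\<epsilon> \<le> \<bar>f U\<bar>" by simp
      then have "f U \<noteq> 0" using \<open>\<epsilon> > 0\<close> by auto
      then have "U \<in> P" "f U = w U" using K_nonzero[OF \<open>f \<in> K\<close>] by auto
      then have "\<epsilon> \<le> 1 / (real (level U) + 1)"
        using \<open>\<epsilon> \<le> \<bar>f U\<bar>\<close> weight_pos[of U] weight[of U] by simp
      then have "real (level U) + 1 \<le> 1 / \<epsilon>" using \<open>\<epsilon> > 0\<close> by (simp add: field_simps)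
      then have "level U \<le> N" unfolding N_def by linarith
      then show "U \<in> (\<Union>n\<le>N. {U \<in> Ps n. f U \<noteq> 0})"
        using level[OF \<open>U \<in> P\<close>] \<open>f U \<noteq> 0\<close> by blast
    qed
    moreover have "finite (\<Union>n\<le>N. {U \<in> Ps n. f U \<noteq> 0})"
      by (intro finite_UN_I finite_atMost finite_support_if_strongly_point_finite[OF assms(1) \<open>f \<in> K\<close>])
    ultimately show "finite {U. \<epsilon> \<le> \<bar>f U\<bar>}" by (rule finite_subset)
  qed
qed

lemma K_sum_le_if_bounded:
  assumes "\<forall>F. F \<subseteq> Q \<and> finite F \<and> card F = b + 2 \<longrightarrow> \<Inter>F = {}" and "f \<in> K"
    and "finite G" and "G \<subseteq> Q" and "\<And>U. U \<in> G \<Longrightarrow> U \<in> P \<Longrightarrow> w U \<le> c" and "c \<ge> 0"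
  shows "(\<Sum>U\<in>G. f U) \<le> (real b + 1) * c"
proof -
  let ?G = "{U \<in> G. f U \<noteq> 0}"
  note support = card_support_le_if_bounded[OF assms(1,2)]
  have "card ?G \<le> card {U \<in> Q. f U \<noteq> 0}"
    using assms(4) by (intro card_mono[OF support(1)]) auto
  then have "real (card ?G) \<le> real b + 1" using support(2) by linarith
  have "(\<Sum>U\<in>G. f U) = (\<Sum>U\<in>?G. f U)"
    by (rule sum.mono_neutral_right) (use \<open>finite G\<close> in auto)
  also have "\<dots> \<le> real (card ?G) * c"
    using K_nonzero[OF \<open>f \<in> K\<close>] assms(5) by (intro sum_bounded_above) fastforce
  also have "\<dots> \<le> (real b + 1) * c"
    using \<open>real (card ?G) \<le> real b + 1\<close> \<open>c \<ge> 0\<close> by (rule mult_right_mono)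
  finally show ?thesis .
qed

text \<open>At level n a point of K has at most \<open>b n + 1\<close> nonzero coordinates, each at most
  \<open>2\<^sup>-\<^sup>n / (b n + 1)\<close>; so its coordinates sum to at most 2, and their squares too.\<close>
lemma K_sum_squares_le:
  assumes bounded: "\<And>n. \<forall>F. F \<subseteq> Ps n \<and> finite F \<and> card F = b n + 2 \<longrightarrow> \<Inter>F = {}"
    and level: "\<And>U. U \<in> P \<Longrightarrow> U \<in> Ps (level U)"
    and weight: "\<And>U. U \<in> P \<Longrightarrow> w U * (real (b (level U)) + 1) \<le> (1/2) ^ level U"
    and "f \<in> K" and "finite G"
  shows "(\<Sum>U\<in>G. (f U)\<^sup>2) \<le> 2"
proof -
  define G' where "G' = {U \<in> G. f U \<noteq> 0}"
  have "finite G'" using \<open>finite G\<close> by (simp add: G'_def)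
  have "G' \<subseteq> P" using K_nonzero[OF \<open>f \<in> K\<close>] by (auto simp: G'_def)
  have w_le_1: "w U \<le> 1" if "U \<in> P" for U
  proof -
    have "w U * 1 \<le> w U * (real (b (level U)) + 1)"
      using weight_pos[OF that] by (intro mult_left_mono) auto
    then show ?thesis
      using weight[OF that] power_le_one[of "1/2 :: real" "level U"] by linarith
  qed
  have "0 \<le> f U \<and> f U \<le> 1" for U
  proof (cases "U \<in> P")
    case True
    then show ?thesis using K_bounds[OF \<open>f \<in> K\<close>, of U] w_le_1[OF True] by simp
  qed (use K_bounds[OF \<open>f \<in> K\<close>, of U] in simp)
  then have "(f U)\<^sup>2 \<le> f U" for U
    using mult_left_le[of "f U" "f U"] by (simp add: power2_eq_square)
  then have "(\<Sum>U\<in>G. (f U)\<^sup>2) \<le> (\<Sum>U\<in>G. f U)" by (rule sum_mono)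
  also have "\<dots> = (\<Sum>U\<in>G'. f U)"
    unfolding G'_def by (rule sum.mono_neutral_right) (use \<open>finite G\<close> in auto)
  also have "\<dots> = (\<Sum>n\<in>level ` G'. \<Sum>U\<in>{U \<in> G'. level U = n}. f U)"
    by (rule sum.image_gen[OF \<open>finite G'\<close>])
  also have "\<dots> \<le> (\<Sum>n\<in>level ` G'. (real (b n) + 1) * ((1/2) ^ n / (real (b n) + 1)))"
  proof (intro sum_mono K_sum_le_if_bounded[OF bounded \<open>f \<in> K\<close>])
    fix n U assume "U \<in> {U \<in> G'. level U = n}" "U \<in> P"
    then show "w U \<le> (1/2) ^ n / (real (b n) + 1)"
      using weight[of U] by (simp add: pos_le_divide_eq)
  qed (use level \<open>finite G'\<close> \<open>G' \<subseteq> P\<close> in fastforce)+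
  also have "\<dots> = (\<Sum>n\<in>level ` G'. (1/2) ^ n)"
    by (intro sum.cong) auto
  also have "\<dots> \<le> (\<Sum>n. (1/2 :: real) ^ n)"
    using \<open>finite G'\<close> by (intro sum_le_suminf) (auto simp: summable_geometric)
  also have "\<dots> = 2" by (simp add: suminf_geometric)
  finally show ?thesis .
qed

end

theorem embeds_in_zero_dim_eberlein_compact:
  fixes X :: "'a topology"
  assumes "t0_space X" "clopen_family X P" "sigma_strongly_point_finite P"
    "subbase_of (P \<union> {topspace X - U | U. U \<in> P}) X"
  shows "\<exists>(K :: ('a set \<Rightarrow> real) topology) e.
           eberlein_compact TYPE('a set \<Rightarrow> real) K \<and> K dim_le 0 \<and> embedding_map X K e"
proof -
  obtain Ps :: "nat \<Rightarrow> 'a set set" where Ps: "P = (\<Union>n. Ps n)" "\<And>n. strongly_point_finite (Ps n)"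
    using assms(3) unfolding sigma_strongly_point_finite_def by blast
  define level where "level U = (LEAST n. U \<in> Ps n)" for U
  have level: "U \<in> Ps (level U)" if "U \<in> P" for U
    using that unfolding Ps(1) level_def by (auto intro: LeastI)
  define w where "w U = 1 / (real (level U) + 1)" for U
  interpret weighted_clopen_subbase X P w
    by unfold_locales (use assms in \<open>auto simp: w_def\<close>)
  have "K \<subseteq> c0"
    by (rule K_subset_c0[where Ps = Ps and level = level]) (use Ps(2) level in \<open>auto simp: w_def\<close>)
  moreover have "\<bar>f U\<bar> \<le> 1" if "f \<in> K" for f U
  proof -
    have "w U \<le> 1" by (simp add: w_def)
    then show ?thesis using K_bounds[OF that, of U] by (auto split: if_splits)
  qed
  ultimately have "eberlein_compact TYPE('a set \<Rightarrow> real) (top_of_set K)"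
    by (intro eberlein_compact_if_bounded_compact_in_c0[OF compact_K])
  then show ?thesis using K_dim_le_0 embedding_map_embed by blast
qed

theorem embeds_in_zero_dim_uniform_eberlein_compact:
  fixes X :: "'a topology"
  assumes "t0_space X" "clopen_family X P" "sigma_boundedly_point_finite P"
    "subbase_of (P \<union> {topspace X - U | U. U \<in> P}) X"
  shows "\<exists>(K :: ('a set \<Rightarrow> real) topology) e.
           uniform_eberlein_compact TYPE('a set \<Rightarrow> real) K \<and> K dim_le 0 \<and> embedding_map X K e"
proof -
  obtain Ps :: "nat \<Rightarrow> 'a set set" where Ps: "P = (\<Union>n. Ps n)" "\<And>n. boundedly_point_finite (Ps n)"
    using assms(3) unfolding sigma_boundedly_point_finite_def by blast
  then obtain b where b: "\<And>n. \<forall>F. F \<subseteq> Ps n \<and> finite F \<and> card F = b n + 2 \<longrightarrow> \<Inter>F = {}"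
    unfolding boundedly_point_finite_def by metis
  define level where "level U = (LEAST n. U \<in> Ps n)" for U
  have level: "U \<in> Ps (level U)" if "U \<in> P" for U
    using that unfolding Ps(1) level_def by (auto intro: LeastI)
  define w where "w U = (1/2) ^ level U / (real (b (level U)) + 1)" for U
  interpret weighted_clopen_subbase X P w
    by unfold_locales (use assms in \<open>auto simp: w_def\<close>)
  have sum_squares: "(\<Sum>U\<in>G. (f U)\<^sup>2) \<le> 2" if "f \<in> K" "finite G" for f G
    by (rule K_sum_squares_le[where Ps = Ps and b = b and level = level])
      (use b level that in \<open>auto simp: w_def\<close>)
  have "f \<in> l2" "l2_inner f f \<le> 2" if "f \<in> K" for f
    using l2_if_bounded_sum_squares[OF sum_squares[OF that]] by simp_all
  then have "uniform_eberlein_compact TYPE('a set \<Rightarrow> real) (top_of_set K)"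
    by (intro uniform_eberlein_compact_if_bounded_compact_in_l2[OF compact_K]) auto
  then show ?thesis using K_dim_le_0 embedding_map_embed by blast
qed

lemma subbase_of_clopen_base:
  assumes clopen: "clopen_family X B" and base: "base_of B X"
  shows "subbase_of (B \<union> {topspace X - U | U. U \<in> B}) X"
proof -
  let ?S = "B \<union> {topspace X - U | U. U \<in> B}"
  let ?T = "finite intersection_of (\<lambda>U. U \<in> ?S) relative_to topspace X"
  have openin_S: "openin X S" if "S \<in> ?S" for S
    using that clopen by (auto simp: clopen_family_def)
  have "?T U" if "U \<in> B" for U
  proof -
    have "(finite intersection_of (\<lambda>U. U \<in> ?S)) U"
      unfolding intersection_of_def using that by (intro exI[of _ "{U}"]) auto
    moreover have "topspace X \<inter> U = U" using openin_subset[OF openin_S] that by blast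
    ultimately show ?thesis unfolding relative_to_def by blast
  qed
  then have "arbitrary union_of (\<lambda>U. U \<in> B) \<le> arbitrary union_of ?T"
    by (intro predicate1I) (auto simp: union_of_def)
  moreover have "openin X V" if T: "?T V" for V
  proof -
    obtain S where "(finite intersection_of (\<lambda>U. U \<in> ?S)) S" "V = topspace X \<inter> S"
      using T unfolding relative_to_def by blast
    then obtain \<U> where "finite \<U>" "\<U> \<subseteq> ?S" "V = topspace X \<inter> \<Inter>\<U>"
      unfolding intersection_of_def by auto
    have "openin X (topspace X \<inter> \<Inter>\<U>)"
      by (rule openin_Int_Inter[OF \<open>finite \<U>\<close> openin_topspace]) (use \<open>\<U> \<subseteq> ?S\<close> openin_S in blast)
    then show ?thesis using \<open>V = topspace X \<inter> \<Inter>\<U>\<close> by simp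
  qed
  then have "arbitrary union_of ?T \<le> openin X"
    by (intro predicate1I) (auto simp: union_of_def)
  moreover have "openin X = arbitrary union_of (\<lambda>U. U \<in> B)"
    using base by (simp add: base_of_def)
  ultimately have "openin X = arbitrary union_of ?T" by (simp add: antisym)
  then show ?thesis
    unfolding subbase_of_def using openin_S openin_subset by blast
qed

lemma sigma_disjoint_imp_sigma_boundedly_point_finite:
  assumes "sigma_disjoint P" shows "sigma_boundedly_point_finite P"
proof -
  obtain Ps :: "nat \<Rightarrow> 'a set set" where Ps: "P = (\<Union>n. Ps n)" "\<And>n. pairwise disjnt (Ps n)"
    using assms unfolding sigma_disjoint_def by blast
  have "boundedly_point_finite (Ps n)" for n
    unfolding boundedly_point_finite_def
  proof (intro exI[of _ 0] allI impI)
    fix F assume "F \<subseteq> Ps n \<and> finite F \<and> card F = 0 + 2"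
    moreover from this have "card F = 2" by simp
    then obtain A B where "F = {A, B}" "A \<noteq> B" unfolding card_2_iff by blast
    ultimately show "\<Inter>F = {}" using Ps(2)[of n] by (auto simp: pairwise_def disjnt_def)
  qed
  then show ?thesis unfolding sigma_boundedly_point_finite_def using Ps(1) by blast
qed

theorem theorem5p4:
  shows
  "(\<forall>(X :: 'a topology) \<P>. t0_space X \<and> clopen_family X \<P> \<and>
       sigma_strongly_point_finite \<P> \<and>
       subbase_of (\<P> \<union> {topspace X - U | U. U \<in> \<P>}) X \<longrightarrow>
       (\<exists>(K :: ('a set \<Rightarrow> real) topology) e.
          eberlein_compact TYPE('a set \<Rightarrow> real) K \<and> K dim_le 0 \<and> embedding_map X K e))
   \<and>
   (\<forall>(X :: 'a topology) \<P>. t0_space X \<and> clopen_family X \<P> \<and>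
       sigma_boundedly_point_finite \<P> \<and>
       subbase_of (\<P> \<union> {topspace X - U | U. U \<in> \<P>}) X \<longrightarrow>
       (\<exists>(K :: ('a set \<Rightarrow> real) topology) e.
          uniform_eberlein_compact TYPE('a set \<Rightarrow> real) K \<and> K dim_le 0 \<and> embedding_map X K e))
   \<and>
   (\<forall>(X :: 'a topology) \<B>. t0_space X \<and> clopen_family X \<B> \<and>
       sigma_strongly_point_finite \<B> \<and> base_of \<B> X \<longrightarrow>
       (\<exists>(K :: ('a set \<Rightarrow> real) topology) e.
          eberlein_compact TYPE('a set \<Rightarrow> real) K \<and> K dim_le 0 \<and> embedding_map X K e))
   \<and>
   (\<forall>(X :: 'a topology) \<B>. t0_space X \<and> clopen_family X \<B> \<and>
       (sigma_boundedly_point_finite \<B> \<or> sigma_disjoint \<B>) \<and> base_of \<B> X \<longrightarrow>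
       (\<exists>(K :: ('a set \<Rightarrow> real) topology) e.
          uniform_eberlein_compact TYPE('a set \<Rightarrow> real) K \<and> K dim_le 0 \<and> embedding_map X K e))"
proof (intro conjI allI impI)
  fix X :: "'a topology" and P
  assume "t0_space X \<and> clopen_family X P \<and> sigma_strongly_point_finite P \<and>
      subbase_of (P \<union> {topspace X - U | U. U \<in> P}) X"
  then show "\<exists>(K :: ('a set \<Rightarrow> real) topology) e.
      eberlein_compact TYPE('a set \<Rightarrow> real) K \<and> K dim_le 0 \<and> embedding_map X K e"
    by (intro embeds_in_zero_dim_eberlein_compact) auto
next
  fix X :: "'a topology" and P
  assume "t0_space X \<and> clopen_family X P \<and> sigma_boundedly_point_finite P \<and>
      subbase_of (P \<union> {topspace X - U | U. U \<in> P}) X"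
  then show "\<exists>(K :: ('a set \<Rightarrow> real) topology) e.
      uniform_eberlein_compact TYPE('a set \<Rightarrow> real) K \<and> K dim_le 0 \<and> embedding_map X K e"
    by (intro embeds_in_zero_dim_uniform_eberlein_compact) auto
next
  fix X :: "'a topology" and B
  assume "t0_space X \<and> clopen_family X B \<and> sigma_strongly_point_finite B \<and> base_of B X"
  then show "\<exists>(K :: ('a set \<Rightarrow> real) topology) e.
      eberlein_compact TYPE('a set \<Rightarrow> real) K \<and> K dim_le 0 \<and> embedding_map X K e"
    by (intro embeds_in_zero_dim_eberlein_compact subbase_of_clopen_base) auto
next
  fix X :: "'a topology" and B
  assume "t0_space X \<and> clopen_family X B \<and>
      (sigma_boundedly_point_finite B \<or> sigma_disjoint B) \<and> base_of B X"
  then show "\<exists>(K :: ('a set \<Rightarrow> real) topology) e.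
      uniform_eberlein_compact TYPE('a set \<Rightarrow> real) K \<and> K dim_le 0 \<and> embedding_map X K e"
    by (intro embeds_in_zero_dim_uniform_eberlein_compact subbase_of_clopen_base)
      (auto intro: sigma_disjoint_imp_sigma_boundedly_point_finite)
qed

end
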